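(* Let $N \geq 1$, and let \[ \mathcal{C}(u_1, \dots, u_{2N}) = \tfrac{1}{\sqrt{2}}\begin{bmatrix} X(u_1, \dots, u_N) \\ Y(u_{N+1}, \dots, u_{2N}) \end{bmatrix} \in \mathbb{R}^{2N+2} \] be a local parameterization of the Clifford torus $\frac{1}{\sqrt{2}}\mathbb{S}^N \times \frac{1}{\sqrt{2}}\mathbb{S}^N \subset \mathbb{S}^{2N+1}$. Here $X$ and $Y$ are $\mathbb{R}^{N+1}$-valued local charts of the unit sphere $\mathbb{S}^N$ in independent variables. Let \[ \mathcal{D} = \tfrac{1}{\sqrt{2}}\begin{bmatrix} X \\ -Y \end{bmatrix} \] be its unit normal in $\mathbb{S}^{2N+1}$. Let $g_{ij} = \frac{\partial\mathcal{C}}{\partial u_i} \cdot \frac{\partial\mathcal{C}}{\partial u_j}$, let $(g^{ij})$ be its inverse matrix, and let $\mathbf{g} = \det(g_{ij})$. Define \[ w_j = \frac{\partial\mathcal{C}}{\partial u_j} \cdot \mathbf{J}\mathcal{C}, \qquad j = 1, \dots, 2N. \] Then the following hold, where all sums run over $1 \leq i, j \leq 2N$. (a) $\mathbf{J}\mathcal{C} = (\mathcal{D} \cdot \mathbf{J}\mathcal{C})\,\mathcal{D} + \sum g^{ij} w_j \frac{\partial\mathcal{C}}{\partial u_i}$, and $-\mathbf{J}\mathcal{D} = (\mathcal{D} \cdot \mathbf{J}\mathcal{C})\,\mathcal{C} + \sum g^{ij} w_j \frac{\partial\mathcal{D}}{\partial u_i}$. (b) $1 - (\mathcal{D} \cdot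 \mathbf{J}\mathcal{C})^2 = \sum g^{ij} w_i w_j$. (c) $\sum \frac{\partial}{\partial u_i}\left(\sqrt{\mathbf{g}}\, g^{ij} w_j\right) = 0$. (d) $\sum g^{ij} w_j \frac{\partial}{\partial u_i}(\mathcal{D} \cdot \mathbf{J}\mathcal{C}) = 0$. (e) $\sum g^{ij} \frac{\partial}{\partial u_i}(\mathcal{D} \cdot \mathbf{J}\mathcal{C}) \frac{\partial\mathcal{C}}{\partial u_j} = -2\left(\mathbf{J}\mathcal{D} + (\mathcal{D} \cdot \mathbf{J}\mathcal{C})\,\mathcal{C}\right)$.
   Context: The symbol $\cdot$ denotes the standard Euclidean dot product. $\mathbf{J}$ is the complex structure on $\mathbb{R}^{2N+2} = \mathbb{C}^{N+1}$, where $(X, Y)$ is identified with $X + iY$. It is given by multiplication by $i$, i.e. $\mathbf{J}\begin{bmatrix} X \\ Y \end{bmatrix} = \begin{bmatrix} -Y \\ X \end{bmatrix}$. The Clifford torus is \[ \left\{ \tfrac{1}{\sqrt{2}}\begin{bmatrix} X \\ Y \end{bmatrix} : \|X\| = \|Y\| = 1 \right\} \subset \mathbb{S}^{2N+1} \subset \mathbb{R}^{2N+2}. \] *)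

theory Defs
  imports "HOL-Analysis.Analysis"
begin

text \<open>Coordinates: a vector of R^(2N+2) is indexed by 'm + 'm (Inl = X-block, Inr = Y-block),
  with CARD('m) = N+1; the parameter u of R^(2N) is indexed by 'n + 'n, CARD('n) = N,
  Inl k = u_k (variables of X), Inr k = u_(N+k) (variables of Y).\<close>

definition vjoin :: "real^'a::finite \<Rightarrow> real^'a \<Rightarrow> real^('a + 'a)" where
  "vjoin a b = (\<chi> k. case k of Inl i \<Rightarrow> a $ i | Inr i \<Rightarrow> b $ i)"

definition vleft :: "real^('a::finite + 'a) \<Rightarrow> real^'a" where
  "vleft u = (\<chi> k. u $ Inl k)"

definition vright :: "real^('a::finite + 'a) \<Rightarrow> real^'a" where
  "vright u = (\<chi> k. u $ Inr k)"

text \<open>Complex structure J: (X,Y) identified with X + iY, J(X,Y) = (-Y,X).\<close>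
definition Jmap :: "real^('a::finite + 'a) \<Rightarrow> real^('a + 'a)" where
  "Jmap v = (\<chi> k. case k of Inl i \<Rightarrow> - v $ Inr i | Inr i \<Rightarrow> v $ Inl i)"

definition partial :: "(real^'p \<Rightarrow> 'b::real_normed_vector) \<Rightarrow> 'p \<Rightarrow> real^'p \<Rightarrow> 'b" where
  "partial F i u = vector_derivative (\<lambda>t. F (u + t *\<^sub>R axis i 1)) (at 0)"

primrec ipartial :: "'p list \<Rightarrow> (real^'p \<Rightarrow> 'b::real_normed_vector) \<Rightarrow> real^'p \<Rightarrow> 'b" where
  "ipartial [] f = f"
| "ipartial (i # is) f = partial (ipartial is f) i"

definition smooth_on :: "(real^'p) set \<Rightarrow> (real^'p \<Rightarrow> 'b::real_normed_vector) \<Rightarrow> bool" where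
  "smooth_on U f \<longleftrightarrow> (\<forall>is. ipartial is f differentiable_on U)"

definition sphere_chart :: "(real^'n) set \<Rightarrow> (real^'n \<Rightarrow> real^'m) \<Rightarrow> bool" where
  "sphere_chart U X \<longleftrightarrow> open U \<and> smooth_on U X \<and> inj_on X U \<and> X ` U \<subseteq> sphere 0 1 \<and>
     (\<forall>u\<in>U. \<exists>X'. (X has_derivative X') (at u) \<and> inj X')"

definition cliffC :: "(real^'n \<Rightarrow> real^'m) \<Rightarrow> (real^'n \<Rightarrow> real^'m) \<Rightarrow> real^('n + 'n) \<Rightarrow> real^('m + 'm)" where
  "cliffC X Y u = (1 / sqrt 2) *\<^sub>R vjoin (X (vleft u)) (Y (vright u))"

definition cliffD :: "(real^'n \<Rightarrow> real^'m) \<Rightarrow> (real^'n \<Rightarrow> real^'m) \<Rightarrow> real^('n + 'n) \<Rightarrow> real^('m + 'm)" where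
  "cliffD X Y u = (1 / sqrt 2) *\<^sub>R vjoin (X (vleft u)) (- Y (vright u))"

definition metric :: "(real^('n::finite + 'n) \<Rightarrow> real^('m::finite + 'm)) \<Rightarrow> real^('n + 'n) \<Rightarrow> real^('n + 'n)^('n + 'n)" where
  "metric C u = (\<chi> i j. partial C i u \<bullet> partial C j u)"

definition wvec :: "(real^('n::finite + 'n) \<Rightarrow> real^('m::finite + 'm)) \<Rightarrow> real^('n + 'n) \<Rightarrow> ('n + 'n) \<Rightarrow> real" where
  "wvec C u j = partial C j u \<bullet> Jmap (C u)"

end

theory Submission
  imports Defs
begin

text \<open>At a point of the torus the vectors \<open>\<partial>\<^sub>iC\<close>, \<open>C\<close>, \<open>D\<close> form a basis of
  \<open>\<real>\<^sup>2\<^sup>N\<^sup>+\<^sup>2\<close>, with \<open>C\<close>, \<open>D\<close> orthonormal and orthogonal to every \<open>\<partial>\<^sub>iC\<close>. Expanding \<open>JC\<close>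
  in this basis gives (a) and (b); conjugation \<open>(X, Y) \<mapsto> (X, -Y)\<close> maps \<open>C\<close> to \<open>D\<close> and
  anticommutes with \<open>J\<close>, which turns the expansion of \<open>JC\<close> into that of \<open>JD\<close> and computes the
  derivatives of \<open>D \<bullet> JC\<close> needed for (d) and (e). For (c), let \<open>M\<close> be the matrix with columns
  \<open>\<partial>\<^sub>iC, C, D\<close>: then \<open>\<^bold>g = (det M)\<^sup>2\<close>, and Cramer's rule writes \<open>\<surd>\<^bold>g g\<^sup>i\<^sup>j w\<^sub>j\<close> as
  \<open>\<plusminus> det M\<^sub>i\<close>, where \<open>M\<^sub>i\<close> has the column \<open>\<partial>\<^sub>iC\<close> replaced by \<open>JC\<close>. Differentiating \<open>det M\<^sub>i\<close>
  column by column, everything in \<open>\<Sum>\<^sub>i \<partial>\<^sub>i det M\<^sub>i\<close> cancels.\<close>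

lemma partial_eq_derivative:
  assumes "(F has_derivative F') (at v)"
  shows "partial F i v = F' (axis i 1)"
proof -
  have "((\<lambda>t. v + t *\<^sub>R axis i 1) has_derivative (\<lambda>t. t *\<^sub>R axis i 1)) (at 0)"
    by (auto intro!: derivative_eq_intros)
  then have "((\<lambda>t. F (v + t *\<^sub>R axis i 1)) has_derivative (\<lambda>t. F' (t *\<^sub>R axis i 1))) (at 0)"
    using has_derivative_compose[of "\<lambda>t. v + t *\<^sub>R axis i 1" _ 0 UNIV F F'] assms by simp
  then have "((\<lambda>t. F (v + t *\<^sub>R axis i 1)) has_vector_derivative F' (axis i 1)) (at 0)"
    unfolding has_vector_derivative_def
    using linear_cmul[OF has_derivative_linear[OF assms]] by simp
  then show ?thesis
    unfolding partial_def by (rule vector_derivative_at)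
qed

lemma linear_eq_sum_axis:
  assumes "linear (L :: real^'n \<Rightarrow> 'b::real_vector)"
  shows "L x = (\<Sum>k\<in>UNIV. x $ k *\<^sub>R L (axis k 1))"
proof -
  have "L x = L (\<Sum>k\<in>UNIV. x $ k *\<^sub>R axis k 1)"
    using basis_expansion[of x] by (simp add: scalar_mult_eq_scaleR)
  also have "\<dots> = (\<Sum>k\<in>UNIV. x $ k *\<^sub>R L (axis k 1))"
    by (simp add: linear_sum[OF assms] linear_cmul[OF assms])
  finally show ?thesis .
qed

lemma has_derivative_locally_constant:
  assumes "(f has_derivative f') (at v)" "open U" "v \<in> U" "\<And>w. w \<in> U \<Longrightarrow> f w = c"
  shows "f' x = 0"
proof -
  have "((\<lambda>_. c) has_derivative (\<lambda>_. 0)) (at v)" by simp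
  then have "(f has_derivative (\<lambda>_. 0)) (at v)"
    by (rule has_derivative_transform_within_open[OF _ assms(2,3)]) (use assms(4) in auto)
  then show ?thesis
    using has_derivative_unique[OF assms(1)] by metis
qed

lemma differentiable_transform_within_open:
  assumes "f differentiable (at x)" "open S" "x \<in> S" "\<And>y. y \<in> S \<Longrightarrow> f y = g y"
  shows "g differentiable (at x)"
  using assms has_derivative_transform_within_open unfolding differentiable_def by blast

lemma partial_sum:
  assumes "finite S" "\<And>j. j \<in> S \<Longrightarrow> f j differentiable (at u)"
  shows "partial (\<lambda>v. \<Sum>j\<in>S. f j v) i u = (\<Sum>j\<in>S. partial (f j) i u)"
proof -
  have d: "(f j has_derivative frechet_derivative (f j) (at u)) (at u)" if "j \<in> S" for j
    using assms(2)[OF that] frechet_derivative_works by blast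
  then have "((\<lambda>v. \<Sum>j\<in>S. f j v) has_derivative (\<lambda>x. \<Sum>j\<in>S. frechet_derivative (f j) (at u) x)) (at u)"
    by (rule has_derivative_sum)
  then have "partial (\<lambda>v. \<Sum>j\<in>S. f j v) i u = (\<Sum>j\<in>S. frechet_derivative (f j) (at u) (axis i 1))"
    by (rule partial_eq_derivative)
  also have "\<dots> = (\<Sum>j\<in>S. partial (f j) i u)"
    by (intro sum.cong refl) (simp add: partial_eq_derivative[OF d])
  finally show ?thesis .
qed

lemma partial_const_mult:
  fixes f :: "real^'p \<Rightarrow> real"
  assumes "f differentiable (at u)"
  shows "partial (\<lambda>v. c * f v) i u = c * partial f i u"
proof -
  have d: "(f has_derivative frechet_derivative f (at u)) (at u)"
    using assms frechet_derivative_works by blast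
  show ?thesis
    using partial_eq_derivative[OF has_derivative_mult_right[OF d]] partial_eq_derivative[OF d]
    by simp
qed

lemma partial_cong_open:
  assumes "f differentiable (at u)" "open S" "u \<in> S" "\<And>v. v \<in> S \<Longrightarrow> f v = g v"
  shows "partial g i u = partial f i u"
proof -
  have "(f has_derivative frechet_derivative f (at u)) (at u)"
    using assms(1) frechet_derivative_works by blast
  moreover from this have "(g has_derivative frechet_derivative f (at u)) (at u)"
    by (rule has_derivative_transform_within_open[OF _ assms(2-4)])
  ultimately show ?thesis by (simp add: partial_eq_derivative)
qed

subsection \<open>Symmetry of second partial derivatives\<close>

lemma has_real_derivative_along_line:
  fixes f :: "'a::real_normed_vector \<Rightarrow> real"
  assumes "(f has_derivative f') (at (w + s *\<^sub>R a))"
  shows "((\<lambda>s. f (w + s *\<^sub>R a)) has_real_derivative f' a) (at s)"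
proof -
  have "((\<lambda>s. w + s *\<^sub>R a) has_derivative (\<lambda>t. t *\<^sub>R a)) (at s)"
    by (auto intro!: derivative_eq_intros)
  then have "((\<lambda>s. f (w + s *\<^sub>R a)) has_derivative (\<lambda>t. f' (t *\<^sub>R a))) (at s)"
    using has_derivative_compose[of "\<lambda>s. w + s *\<^sub>R a" _ s UNIV f f'] assms by simp
  then show ?thesis
    by (rule has_derivative_imp_has_field_derivative)
      (simp add: linear_cmul[OF has_derivative_linear[OF assms]])
qed

text \<open>Mean value theorem for \<open>s \<mapsto> f (u + t b + s a) - f (u + s a)\<close> on \<open>[0, t]\<close>.\<close>
lemma mixed_difference_estimate:
  fixes f :: "'a::real_normed_vector \<Rightarrow> real"
  assumes t: "t > 0" and na: "norm a = 1" and nb: "norm b = 1"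
    and der: "\<And>v. norm (v - u) \<le> 2 * t \<Longrightarrow> (f has_derivative f' v) (at v)"
    and lin: "linear L"
    and approx: "\<And>z. norm z \<le> 2 * t \<Longrightarrow> \<bar>f' (u + z) a - f' u a - L z\<bar> \<le> e * norm z"
  shows "\<bar>(f (u + t *\<^sub>R a + t *\<^sub>R b) - f (u + t *\<^sub>R a) - f (u + t *\<^sub>R b) + f u) - t\<^sup>2 * L b\<bar>
    \<le> 3 * e * t\<^sup>2"
proof -
  define \<psi> where "\<psi> s = f ((u + t *\<^sub>R b) + s *\<^sub>R a) - f (u + s *\<^sub>R a)" for s
  define \<psi>' where "\<psi>' s = f' ((u + t *\<^sub>R b) + s *\<^sub>R a) a - f' (u + s *\<^sub>R a) a" for s
  have e0: "e \<ge> 0"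
  proof -
    have "\<bar>f' (u + t *\<^sub>R a) a - f' u a - L (t *\<^sub>R a)\<bar> \<le> e * norm (t *\<^sub>R a)"
      using approx[of "t *\<^sub>R a"] t na by simp
    then have "0 \<le> e * t" using t na by simp
    then show ?thesis using t by (simp add: zero_le_mult_iff)
  qed
  have "\<exists>z. 0 < z \<and> z < t \<and> \<psi> t - \<psi> 0 = (t - 0) * \<psi>' z"
  proof (rule MVT2[OF t])
    fix s :: real assume s: "0 \<le> s" "s \<le> t"
    have "norm (t *\<^sub>R b + s *\<^sub>R a) \<le> norm (t *\<^sub>R b) + norm (s *\<^sub>R a)"
      by (rule norm_triangle_ineq)
    also have "\<dots> = t + s" using s t na nb by simp
    finally have n1: "norm ((u + t *\<^sub>R b + s *\<^sub>R a) - u) \<le> 2 * t"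
      using s by (simp add: algebra_simps)
    have n2: "norm ((u + s *\<^sub>R a) - u) \<le> 2 * t" using s t na by simp
    show "(\<psi> has_real_derivative \<psi>' s) (at s)"
      unfolding \<psi>_def \<psi>'_def
      by (intro derivative_intros has_real_derivative_along_line der n1 n2)
  qed
  then obtain z where z: "0 < z" "z < t" "\<psi> t - \<psi> 0 = t * \<psi>' z" by auto
  have "\<psi> t - \<psi> 0 = f (u + t *\<^sub>R a + t *\<^sub>R b) - f (u + t *\<^sub>R a) - f (u + t *\<^sub>R b) + f u"
    unfolding \<psi>_def by (simp add: algebra_simps)
  moreover have "\<bar>\<psi>' z - t * L b\<bar> \<le> 3 * e * t"
  proof -
    let ?z1 = "t *\<^sub>R b + z *\<^sub>R a" and ?z2 = "z *\<^sub>R a"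
    have "norm ?z1 \<le> norm (t *\<^sub>R b) + norm (z *\<^sub>R a)" by (rule norm_triangle_ineq)
    also have "\<dots> = t + z" using z t na nb by simp
    finally have nz1: "norm ?z1 \<le> 2 * t" using z by simp
    have nz2: "norm ?z2 \<le> t" using z na by simp
    have a1: "\<bar>f' (u + ?z1) a - f' u a - L ?z1\<bar> \<le> e * norm ?z1"
      using approx nz1 by blast
    have a2: "\<bar>f' (u + ?z2) a - f' u a - L ?z2\<bar> \<le> e * norm ?z2"
      using approx[of ?z2] nz2 t by linarith
    have "L ?z1 - L ?z2 = t * L b" using lin by (simp add: linear_add linear_cmul)
    moreover have "\<psi>' z = (f' (u + ?z1) a - f' u a) - (f' (u + ?z2) a - f' u a)"
      unfolding \<psi>'_def by (simp add: algebra_simps)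
    moreover have "e * norm ?z1 \<le> e * (2 * t)" using nz1 e0 by (simp add: mult_left_mono)
    moreover have "e * norm ?z2 \<le> e * t" using nz2 e0 by (simp add: mult_left_mono)
    ultimately show ?thesis using a1 a2 by (simp add: abs_le_iff algebra_simps)
  qed
  then have "\<bar>t * \<psi>' z - t\<^sup>2 * L b\<bar> \<le> 3 * e * t\<^sup>2"
  proof -
    have "\<bar>t * \<psi>' z - t\<^sup>2 * L b\<bar> = t * \<bar>\<psi>' z - t * L b\<bar>"
      using t by (simp add: power2_eq_square abs_mult right_diff_distrib[symmetric] mult.assoc)
    also have "\<dots> \<le> t * (3 * e * t)"
      using \<open>\<bar>\<psi>' z - t * L b\<bar> \<le> 3 * e * t\<close> t by (simp add: mult_left_mono)
    finally show ?thesis by (simp add: power2_eq_square algebra_simps)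
  qed
  ultimately show ?thesis using z by simp
qed

lemma second_derivative_symmetric:
  fixes f :: "real^'p::finite \<Rightarrow> real"
  assumes S: "open S" "u \<in> S" and der: "\<And>v. v \<in> S \<Longrightarrow> (f has_derivative f' v) (at v)"
    and Di: "((\<lambda>v. f' v (axis i 1)) has_derivative Li) (at u)"
    and Dj: "((\<lambda>v. f' v (axis j 1)) has_derivative Lj) (at u)"
  shows "Li (axis j 1) = Lj (axis i 1)"
proof (cases "i = j")
  case True
  then show ?thesis using has_derivative_unique[OF Di] Dj by simp
next
  case False
  show ?thesis
  proof (rule ccontr)
    assume ne: "Li (axis j 1) \<noteq> Lj (axis i 1)"
    define d where "d = \<bar>Li (axis j 1) - Lj (axis i 1)\<bar>"
    have d: "d > 0" using ne by (simp add: d_def)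
    define e where "e = d / 7"
    have e: "e > 0" using d by (simp add: e_def)
    obtain di where di: "di > 0" "\<And>y. norm (y - u) < di \<Longrightarrow>
        norm (f' y (axis i 1) - f' u (axis i 1) - Li (y - u)) \<le> e * norm (y - u)"
      using Di e unfolding has_derivative_at_alt by blast
    obtain dj where dj: "dj > 0" "\<And>y. norm (y - u) < dj \<Longrightarrow>
        norm (f' y (axis j 1) - f' u (axis j 1) - Lj (y - u)) \<le> e * norm (y - u)"
      using Dj e unfolding has_derivative_at_alt by blast
    obtain r where r: "r > 0" "ball u r \<subseteq> S" using S openE by blast
    define t where "t = min di (min dj r) / 3"
    have t: "t > 0" using di dj r by (simp add: t_def)
    have t2: "2 * t < di" "2 * t < dj" "2 * t < r" using di dj r by (auto simp: t_def)
    have der_near: "(f has_derivative f' v) (at v)" if "norm (v - u) \<le> 2 * t" for v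
    proof -
      have "v \<in> ball u r" using that t2 by (simp add: dist_norm norm_minus_commute)
      then show ?thesis using r der by blast
    qed
    have approx_i: "\<bar>f' (u + z) (axis i 1) - f' u (axis i 1) - Li z\<bar> \<le> e * norm z"
      if "norm z \<le> 2 * t" for z
      using di(2)[of "u + z"] that t2 by simp
    have approx_j: "\<bar>f' (u + z) (axis j 1) - f' u (axis j 1) - Lj z\<bar> \<le> e * norm z"
      if "norm z \<le> 2 * t" for z
      using dj(2)[of "u + z"] that t2 by simp
    have est_i: "\<bar>(f (u + t *\<^sub>R axis i 1 + t *\<^sub>R axis j 1) - f (u + t *\<^sub>R axis i 1)
        - f (u + t *\<^sub>R axis j 1) + f u) - t\<^sup>2 * Li (axis j 1)\<bar> \<le> 3 * e * t\<^sup>2"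
      by (rule mixed_difference_estimate[OF t _ _ der_near has_derivative_linear[OF Di] approx_i])
        simp_all
    have est_j: "\<bar>(f (u + t *\<^sub>R axis j 1 + t *\<^sub>R axis i 1) - f (u + t *\<^sub>R axis j 1)
        - f (u + t *\<^sub>R axis i 1) + f u) - t\<^sup>2 * Lj (axis i 1)\<bar> \<le> 3 * e * t\<^sup>2"
      by (rule mixed_difference_estimate[OF t _ _ der_near has_derivative_linear[OF Dj] approx_j])
        simp_all
    have swap: "u + t *\<^sub>R axis j 1 + t *\<^sub>R axis i 1 = u + t *\<^sub>R axis i 1 + t *\<^sub>R axis j 1"
      by (simp add: algebra_simps)
    have "\<bar>t\<^sup>2 * Li (axis j 1) - t\<^sup>2 * Lj (axis i 1)\<bar> \<le> 6 * e * t\<^sup>2"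
      using est_i est_j[unfolded swap] by argo
    moreover have "\<bar>t\<^sup>2 * Li (axis j 1) - t\<^sup>2 * Lj (axis i 1)\<bar> = t\<^sup>2 * d"
      unfolding d_def right_diff_distrib[symmetric] abs_mult by simp
    ultimately have "d \<le> 6 * e" using t by (simp add: mult.commute)
    then show False using d by (simp add: e_def)
  qed
qed

lemma partial_partial_commute:
  fixes F :: "real^'p::finite \<Rightarrow> 'b::real_inner"
  assumes S: "open S" "u \<in> S" and dF: "\<And>v. v \<in> S \<Longrightarrow> F differentiable (at v)"
    and dP: "\<And>k. partial F k differentiable (at u)"
  shows "partial (partial F j) i u = partial (partial F i) j u"
proof -
  define F' where "F' v = frechet_derivative F (at v)" for v
  have hF: "(F has_derivative F' v) (at v)" if "v \<in> S" for v
    using dF[OF that] unfolding F'_def frechet_derivative_works .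
  obtain G where G: "(partial F k has_derivative G k) (at u)" for k
    using dP unfolding differentiable_def by metis
  have "G i (axis j 1) \<bullet> y = G j (axis i 1) \<bullet> y" for y
  proof -
    have hf: "((\<lambda>v. F v \<bullet> y) has_derivative (\<lambda>x. F' v x \<bullet> y)) (at v)" if "v \<in> S" for v
      using bounded_linear.has_derivative[OF bounded_linear_inner_left hF[OF that]] .
    have "((\<lambda>v. F' v (axis k 1) \<bullet> y) has_derivative (\<lambda>x. G k x \<bullet> y)) (at u)" for k
    proof (rule has_derivative_transform_within_open[OF _ S])
      show "((\<lambda>v. partial F k v \<bullet> y) has_derivative (\<lambda>x. G k x \<bullet> y)) (at u)"
        using bounded_linear.has_derivative[OF bounded_linear_inner_left G] .
      show "partial F k v \<bullet> y = F' v (axis k 1) \<bullet> y" if "v \<in> S" for v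
        using partial_eq_derivative[OF hF[OF that]] by simp
    qed
    then show ?thesis
      using second_derivative_symmetric[OF S hf] by blast
  qed
  then have "G i (axis j 1) = G j (axis i 1)"
    by (metis inner_diff_left right_minus_eq inner_eq_zero_iff)
  then show ?thesis
    using partial_eq_derivative[OF G] by simp
qed

subsection \<open>Determinants and inverses\<close>

text \<open>The columns \<open>F c\<close> live in a space whose coordinates are matched with the column
  indices by \<open>\<beta>\<close>, so that the matrix is square.\<close>
definition col_matrix :: "('c::finite \<Rightarrow> 'r::finite) \<Rightarrow> ('c \<Rightarrow> real^'r) \<Rightarrow> real^'c^'c" where
  "col_matrix \<beta> F = (\<chi> r c. F c $ \<beta> r)"

lemma col_matrix_nth [simp]: "col_matrix \<beta> F $ r $ c = F c $ \<beta> r"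
  by (simp add: col_matrix_def)

lemma det_col_matrix_update_sum:
  "det (col_matrix \<beta> (F(k := (\<Sum>c\<in>UNIV. x c *\<^sub>R F c)))) = x k * det (col_matrix \<beta> F)"
proof -
  have "col_matrix \<beta> (F(k := (\<Sum>c\<in>UNIV. x c *\<^sub>R F c))) =
     (\<chi> i j. if j = k then (col_matrix \<beta> F *v (\<chi> c. x c))$i else (col_matrix \<beta> F)$i$j)"
    by (simp add: vec_eq_iff matrix_vector_mult_def sum_component mult.commute)
  then show ?thesis using cramer_lemma[of k "col_matrix \<beta> F" "\<chi> c. x c"] by simp
qed

lemma det_col_matrix_swap:
  assumes "a \<noteq> b"
  shows "det (col_matrix \<beta> (F \<circ> Transposition.transpose a b)) = - det (col_matrix \<beta> F)"
proof -
  have "col_matrix \<beta> (F \<circ> Transposition.transpose a b) =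
      (\<chi> i j. col_matrix \<beta> F $ i $ Transposition.transpose a b j)"
    by (simp add: vec_eq_iff)
  then show ?thesis
    using det_permute_columns[OF permutes_swap_id[of a UNIV b], of "col_matrix \<beta> F"] assms
    by (simp add: sign_swap_id)
qed

lemma det_col_matrix_update_swap:
  assumes "c1 \<noteq> c2"
  shows "det (col_matrix \<beta> (F(c1 := y, c2 := z))) = - det (col_matrix \<beta> (F(c1 := z, c2 := y)))"
proof -
  have "F(c1 := z, c2 := y) = F(c1 := y, c2 := z) \<circ> Transposition.transpose c1 c2"
    using assms by (auto simp: fun_eq_iff Transposition.transpose_def)
  then show ?thesis using det_col_matrix_swap[OF assms, of \<beta> "F(c1 := y, c2 := z)"] by simp
qed

lemma det_col_matrix_update_scale:
  "det (col_matrix \<beta> (F(k := a *\<^sub>R y))) = a * det (col_matrix \<beta> (F(k := y)))"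
proof -
  have "(\<Sum>c\<in>UNIV. (if c = k then a else 0) *\<^sub>R (F(k := y)) c) =
      (\<Sum>c\<in>UNIV. if c = k then a *\<^sub>R y else 0)"
    by (rule sum.cong) auto
  then have "(\<Sum>c\<in>UNIV. (if c = k then a else 0) *\<^sub>R (F(k := y)) c) = a *\<^sub>R y"
    by simp
  then show ?thesis
    using det_col_matrix_update_sum[of \<beta> "F(k := y)" k "\<lambda>c. if c = k then a else 0"] by simp
qed

lemma has_derivative_det:
  fixes A :: "'x::real_normed_vector \<Rightarrow> real^'n^'n"
  assumes "\<And>i j. ((\<lambda>x. A x $ i $ j) has_derivative A' i j) (at u)"
  shows "((\<lambda>x. det (A x)) has_derivative
     (\<lambda>h. \<Sum>p\<in>{p. p permutes (UNIV::'n set)}. of_int (sign p) *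
        (\<Sum>i\<in>UNIV. A' i (p i) h * (\<Prod>j\<in>UNIV - {i}. A u $ j $ p j)))) (at u)"
  unfolding det_def by (auto intro!: derivative_eq_intros assms)

lemma differentiable_det:
  fixes A :: "'x::real_normed_vector \<Rightarrow> real^'n^'n"
  assumes "\<And>i j. (\<lambda>x. A x $ i $ j) differentiable (at u)"
  shows "(\<lambda>x. det (A x)) differentiable (at u)"
proof -
  obtain A' where "((\<lambda>x. A x $ i $ j) has_derivative A' i j) (at u)" for i j
    using assms unfolding differentiable_def by metis
  then show ?thesis using has_derivative_det unfolding differentiable_def by blast
qed

lemma has_derivative_det_col_matrix:
  fixes F :: "'x::real_normed_vector \<Rightarrow> 'c::finite \<Rightarrow> real^'r::finite"
  assumes "\<And>c. ((\<lambda>x. F x c) has_derivative F' c) (at u)"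
  shows "((\<lambda>x. det (col_matrix \<beta> (F x))) has_derivative
    (\<lambda>h. \<Sum>c\<in>UNIV. det (col_matrix \<beta> ((F u)(c := F' c h))))) (at u)"
proof -
  have "((\<lambda>x. col_matrix \<beta> (F x) $ i $ j) has_derivative (\<lambda>h. F' j h $ \<beta> i)) (at u)" for i j
    using bounded_linear.has_derivative[OF bounded_linear_vec_nth assms[of j], of "\<beta> i"] by simp
  from has_derivative_det[OF this] show ?thesis
  proof (rule has_derivative_eq_rhs, intro ext)
    fix h
    let ?S = "{p. p permutes (UNIV::'c set)}"
    let ?G = "\<lambda>c. (F u)(c := F' c h)"
    have row_sum: "(\<Sum>c\<in>UNIV. \<Prod>r\<in>UNIV. ?G c (p r) $ \<beta> r) =
        (\<Sum>i\<in>UNIV. F' (p i) h $ \<beta> i * (\<Prod>j\<in>UNIV - {i}. F u (p j) $ \<beta> j))"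
      if p: "p permutes (UNIV::'c set)" for p
    proof -
      have "(\<Sum>c\<in>UNIV. \<Prod>r\<in>UNIV. ?G c (p r) $ \<beta> r) = (\<Sum>i\<in>UNIV. \<Prod>r\<in>UNIV. ?G (p i) (p r) $ \<beta> r)"
        using sum.permute[OF p, of "\<lambda>c. \<Prod>r\<in>UNIV. ?G c (p r) $ \<beta> r"] by simp
      also have "\<dots> = (\<Sum>i\<in>UNIV. F' (p i) h $ \<beta> i * (\<Prod>j\<in>UNIV - {i}. F u (p j) $ \<beta> j))"
      proof (rule sum.cong[OF refl])
        fix i
        have "(\<Prod>r\<in>UNIV. ?G (p i) (p r) $ \<beta> r) =
            ?G (p i) (p i) $ \<beta> i * (\<Prod>r\<in>UNIV - {i}. ?G (p i) (p r) $ \<beta> r)"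
          by (rule prod.remove) auto
        also have "(\<Prod>r\<in>UNIV - {i}. ?G (p i) (p r) $ \<beta> r) = (\<Prod>j\<in>UNIV - {i}. F u (p j) $ \<beta> j)"
        proof (rule prod.cong[OF refl])
          fix j assume "j \<in> UNIV - {i}"
          then have "p j \<noteq> p i" using permutes_inj[OF p] by (auto simp: inj_def)
          then show "?G (p i) (p j) $ \<beta> j = F u (p j) $ \<beta> j" by simp
        qed
        finally show "(\<Prod>r\<in>UNIV. ?G (p i) (p r) $ \<beta> r) =
            F' (p i) h $ \<beta> i * (\<Prod>j\<in>UNIV - {i}. F u (p j) $ \<beta> j)"
          by simp
      qed
      finally show ?thesis .
    qed
    have "(\<Sum>c\<in>UNIV. det (col_matrix \<beta> (?G c))) =
        (\<Sum>p\<in>?S. of_int (sign p) * (\<Sum>c\<in>UNIV. \<Prod>r\<in>UNIV. ?G c (p r) $ \<beta> r))"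
      by (simp add: det_def sum_distrib_left) (rule sum.swap)
    also have "\<dots> = (\<Sum>p\<in>?S. of_int (sign p) *
        (\<Sum>i\<in>UNIV. F' (p i) h $ \<beta> i * (\<Prod>j\<in>UNIV - {i}. F u (p j) $ \<beta> j)))"
      by (rule sum.cong[OF refl]) (simp only: mem_Collect_eq row_sum)
    finally show "(\<Sum>p\<in>?S. of_int (sign p) * (\<Sum>i\<in>UNIV. F' (p i) h $ \<beta> i *
        (\<Prod>j\<in>UNIV - {i}. col_matrix \<beta> (F u) $ j $ p j))) = (\<Sum>c\<in>UNIV. det (col_matrix \<beta> (?G c)))"
      by simp
  qed
qed

definition block_id :: "real^'a::finite^'a \<Rightarrow> real^('a + 'b::finite)^('a + 'b)" where
  "block_id A = (\<chi> c c'. case c of Inl i \<Rightarrow> (case c' of Inl j \<Rightarrow> A$i$j | Inr _ \<Rightarrow> 0)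
      | Inr a \<Rightarrow> (case c' of Inl _ \<Rightarrow> 0 | Inr b \<Rightarrow> if a = b then 1 else 0))"

definition lift_perm :: "('a \<Rightarrow> 'a) \<Rightarrow> ('a + 'b \<Rightarrow> 'a + 'b)" where
  "lift_perm q = map_permutation UNIV Inl q"

lemma lift_perm_Inl [simp]: "lift_perm q (Inl i) = Inl (q i)"
  by (simp add: lift_perm_def map_permutation_def restrict_id_def)

lemma lift_perm_Inr [simp]: "lift_perm q (Inr i) = Inr i"
  by (auto simp add: lift_perm_def map_permutation_def restrict_id_def)

lemma lift_perm_permutes:
  "q permutes (UNIV::'a set) \<Longrightarrow> lift_perm q permutes (UNIV :: ('a + 'b) set)"
  unfolding lift_perm_def
  by (rule permutes_subset[OF map_permutation_permutes[of Inl UNIV "range Inl"]])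
    (auto simp: bij_betw_def)

lemma sign_lift_perm:
  "q permutes (UNIV::'a::finite set) \<Longrightarrow> sign (lift_perm q :: 'a + 'b \<Rightarrow> 'a + 'b) = sign q"
  unfolding lift_perm_def by (rule sign_map_permutation) auto

lemma block_id_support:
  fixes A :: "real^'a::finite^'a"
  assumes p: "p permutes (UNIV :: ('a + 'b::finite) set)"
    and nz: "\<And>c. (block_id A :: real^('a + 'b)^('a + 'b)) $ c $ p c \<noteq> 0"
  shows "\<exists>q. q permutes (UNIV :: 'a set) \<and> p = lift_perm q"
proof -
  have p_Inr: "p (Inr a) = Inr a" for a
  proof (cases "p (Inr a)")
    case (Inl j) then show ?thesis using nz[of "Inr a"] by (simp add: block_id_def)
  next
    case (Inr b) then show ?thesis using nz[of "Inr a"] by (simp add: block_id_def split: if_splits)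
  qed
  have "\<exists>j. p (Inl i) = Inl j" for i
  proof (cases "p (Inl i)")
    case (Inr b) then show ?thesis using nz[of "Inl i"] by (simp add: block_id_def)
  qed simp
  then obtain q where p_Inl: "p (Inl i) = Inl (q i)" for i by metis
  have "p = lift_perm q"
  proof
    fix x show "p x = lift_perm q x" by (cases x) (simp_all only: p_Inl p_Inr lift_perm_Inl lift_perm_Inr)
  qed
  moreover have "inj q"
    using permutes_inj[OF p] unfolding inj_def by (metis p_Inl sum.inject(1))
  then have "bij q" by (simp add: bij_def finite_UNIV_inj_surj)
  then have "q permutes UNIV"
    by (intro bij_imp_permutes) (auto simp: bij_def bij_betw_def)
  ultimately show ?thesis by blast
qed

lemma det_block_id: "det (block_id A :: real^('a::finite + 'b::finite)^('a + 'b)) = det (A::real^'a^'a)"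
proof -
  let ?K = "block_id A :: real^('a + 'b)^('a + 'b)"
  let ?S = "{p. p permutes (UNIV :: ('a + 'b) set)}"
  let ?Q = "{q. q permutes (UNIV :: 'a set)}"
  let ?L = "lift_perm :: ('a \<Rightarrow> 'a) \<Rightarrow> 'a + 'b \<Rightarrow> 'a + 'b"
  let ?f = "\<lambda>p. of_int (sign p) * (\<Prod>i\<in>UNIV. ?K $ i $ p i)"
  have sub: "?L ` ?Q \<subseteq> ?S" using lift_perm_permutes by blast
  have zero: "?f p = 0" if p: "p \<in> ?S - ?L ` ?Q" for p
  proof (rule ccontr)
    assume "?f p \<noteq> 0"
    then have "?K $ c $ p c \<noteq> 0" for c
      using prod_zero_iff[of UNIV "\<lambda>i. ?K $ i $ p i"] by auto
    then show False using block_id_support[of p A] p by blast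
  qed
  have "det ?K = sum ?f (?L ` ?Q)"
    unfolding det_def
    by (rule sum.mono_neutral_right) (simp add: finite_permutations, rule sub, use zero in blast)
  also have "\<dots> = sum (?f \<circ> ?L) ?Q"
  proof (rule sum.reindex, rule inj_onI)
    fix q1 q2 :: "'a \<Rightarrow> 'a" assume "?L q1 = ?L q2"
    then have "?L q1 (Inl i) = ?L q2 (Inl i)" for i by simp
    then show "q1 = q2" by (auto simp: fun_eq_iff)
  qed
  also have "\<dots> = sum (\<lambda>q. of_int (sign q) * (\<Prod>i\<in>UNIV. A $ i $ q i)) ?Q"
  proof (rule sum.cong[OF refl])
    fix q assume q: "q \<in> ?Q"
    have "(\<Prod>i\<in>UNIV. ?K $ i $ ?L q i) = (\<Prod>i\<in>UNIV. A $ i $ q i)"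
      by (simp add: UNIV_Plus_UNIV[symmetric] prod.Plus block_id_def del: UNIV_Plus_UNIV)
    then show "(?f \<circ> ?L) q = of_int (sign q) * (\<Prod>i\<in>UNIV. A $ i $ q i)"
      using sign_lift_perm[of q, where 'b='b] q by simp
  qed
  also have "\<dots> = det A" by (simp add: det_def)
  finally show ?thesis .
qed

lemma matrix_inv_right_left:
  assumes "invertible (A::real^'n^'n)"
  shows "A ** matrix_inv A = mat 1" "matrix_inv A ** A = mat 1"
  using someI_ex[OF assms[unfolded invertible_def]] unfolding matrix_inv_def by auto

lemma transpose_matrix_inv_symmetric:
  assumes "invertible (A::real^'n^'n)" "transpose A = A"
  shows "transpose (matrix_inv A) = matrix_inv A"
proof -
  have "A ** transpose (matrix_inv A) = mat 1"
    using arg_cong[OF matrix_inv_right_left(2)[OF assms(1)], of transpose] assms(2)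
    by (simp add: matrix_transpose_mul)
  then have "matrix_inv A ** (A ** transpose (matrix_inv A)) = matrix_inv A" by simp
  then show ?thesis by (simp add: matrix_mul_assoc matrix_inv_right_left(2)[OF assms(1)])
qed

lemma matrix_inv_solve:
  assumes "invertible (A::real^'n^'n)" "A *v x = y"
  shows "x = matrix_inv A *v y"
proof -
  have "matrix_inv A *v y = (matrix_inv A ** A) *v x"
    using assms(2) by (metis matrix_vector_mul_assoc)
  then show ?thesis by (simp add: matrix_inv_right_left(2)[OF assms(1)])
qed

lemma matrix_inv_nth_cramer:
  fixes A :: "real^'n^'n"
  assumes "det A \<noteq> 0"
  shows "matrix_inv A $ i $ j =
    det (\<chi> r c. if c = i then (if r = j then 1 else 0) else A $ r $ c) / det A"
proof -
  have "A *v (\<chi> k. matrix_inv A $ k $ j) = (\<chi> r. if r = j then 1 else 0)"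
    using matrix_inv_right_left(1)[OF assms[folded invertible_det_nz]]
    by (simp add: vec_eq_iff matrix_vector_mult_def matrix_matrix_mult_def mat_def)
  then have "(\<chi> k. matrix_inv A $ k $ j) =
      (\<chi> k. det (\<chi> r c. if c = k then (\<chi> r. if r = j then 1 else 0) $ r else A $ r $ c) / det A)"
    using cramer[OF assms] by blast
  moreover have "(\<chi> r c. if c = i then (\<chi> r. if r = j then 1 else 0) $ r else A $ r $ c) =
      (\<chi> r c. if c = i then (if r = j then 1 else 0) else A $ r $ c :: real^'n^'n)"
    by (simp add: vec_eq_iff)
  ultimately show ?thesis by (simp add: vec_eq_iff)
qed

lemma sum_matrix_mult_scaleR:
  "(\<Sum>i\<in>UNIV. \<Sum>j\<in>UNIV. (A $ i $ j * x j) *\<^sub>R Z i) =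
    (\<Sum>i\<in>UNIV. (A *v (\<chi> j. x j)) $ i *\<^sub>R (Z i :: 'b::real_vector))"
  by (simp add: matrix_vector_mult_def scaleR_sum_left)

lemma sum_sum_antisymmetric:
  fixes b :: "'a::finite \<Rightarrow> 'a \<Rightarrow> real"
  assumes "\<And>i k. b k i = - b i k"
  shows "(\<Sum>i\<in>UNIV. \<Sum>k\<in>UNIV. b i k) = 0"
proof -
  have "(\<Sum>i\<in>UNIV. \<Sum>k\<in>UNIV. b i k) = (\<Sum>k\<in>UNIV. \<Sum>i\<in>UNIV. b i k)"
    by (rule sum.swap)
  also have "\<dots> = (\<Sum>k\<in>UNIV. \<Sum>i\<in>UNIV. - b k i)"
    by (intro sum.cong refl) (rule assms)
  also have "\<dots> = - (\<Sum>i\<in>UNIV. \<Sum>k\<in>UNIV. b i k)" by (simp add: sum_negf)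
  finally show ?thesis by simp
qed

text \<open>Complex conjugation \<open>(X, Y) \<mapsto> (X, -Y)\<close>; it maps the Clifford torus point \<open>C\<close> to
  its normal \<open>D\<close> and anticommutes with \<open>J\<close>.\<close>
definition cconj :: "real^('a::finite + 'a) \<Rightarrow> real^('a + 'a)" where
  "cconj v = (\<chi> k. case k of Inl i \<Rightarrow> v $ Inl i | Inr i \<Rightarrow> - v $ Inr i)"

lemma sum_UNIV_Plus:
  "(\<Sum>k\<in>(UNIV::('a::finite + 'b::finite) set). f k) = (\<Sum>i\<in>UNIV. f (Inl i)) + (\<Sum>i\<in>UNIV. f (Inr i))"
  by (simp add: UNIV_Plus_UNIV[symmetric] sum.Plus del: UNIV_Plus_UNIV)

lemma sum_UNIV_bool: "(\<Sum>b\<in>(UNIV::bool set). f b) = f True + f False"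
  by (simp add: UNIV_bool add.commute)

lemma vjoin_nth [simp]: "vjoin a b $ Inl i = a $ i" "vjoin a b $ Inr i = b $ i"
  by (simp_all add: vjoin_def)

lemma vleft_nth [simp]: "vleft u $ i = u $ Inl i"
  and vright_nth [simp]: "vright u $ i = u $ Inr i"
  by (simp_all add: vleft_def vright_def)

lemma Jmap_nth [simp]: "Jmap v $ Inl i = - v $ Inr i" "Jmap v $ Inr i = v $ Inl i"
  by (simp_all add: Jmap_def)

lemma cconj_nth [simp]: "cconj v $ Inl i = v $ Inl i" "cconj v $ Inr i = - v $ Inr i"
  by (simp_all add: cconj_def)

lemma vec_eq_Plus_iff:
  "(x::'c^('a::finite + 'b::finite)) = y \<longleftrightarrow> (\<forall>i. x $ Inl i = y $ Inl i) \<and> (\<forall>i. x $ Inr i = y $ Inr i)"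
  by (metis obj_sumE vec_eq_iff)

lemma inner_Plus:
  "(x::real^('a::finite + 'a)) \<bullet> y = (\<Sum>i\<in>UNIV. x $ Inl i * y $ Inl i) + (\<Sum>i\<in>UNIV. x $ Inr i * y $ Inr i)"
  by (simp add: inner_vec_def sum_UNIV_Plus)

lemma inner_vjoin: "vjoin a b \<bullet> vjoin c d = a \<bullet> c + b \<bullet> d"
  by (simp add: inner_Plus inner_vec_def)

lemma vjoin_eq_0_iff: "vjoin a b = 0 \<longleftrightarrow> a = 0 \<and> b = 0"
  by (auto simp add: vec_eq_Plus_iff vec_eq_iff)

lemma cconj_vjoin: "cconj (vjoin a b) = vjoin a (- b)"
  by (simp add: vec_eq_Plus_iff)

lemma linear_Jmap: "linear (Jmap :: real^('a::finite + 'a) \<Rightarrow> _)"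
  by (rule linearI) (simp_all add: vec_eq_Plus_iff)

lemma linear_cconj: "linear (cconj :: real^('a::finite + 'a) \<Rightarrow> _)"
  by (rule linearI) (simp_all add: vec_eq_Plus_iff)

lemma bounded_linear_vleft: "bounded_linear (vleft :: real^('a::finite + 'a) \<Rightarrow> _)"
  by (simp add: linear_conv_bounded_linear[symmetric] linearI vec_eq_iff)

lemma bounded_linear_vright: "bounded_linear (vright :: real^('a::finite + 'a) \<Rightarrow> _)"
  by (simp add: linear_conv_bounded_linear[symmetric] linearI vec_eq_iff)

lemma has_derivative_vjoin:
  assumes "(f has_derivative f') (at x within s)" "(g has_derivative g') (at x within s)"
  shows "((\<lambda>x. vjoin (f x) (g x)) has_derivative (\<lambda>h. vjoin (f' h) (g' h))) (at x within s)"
proof -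
  have "linear (\<lambda>p::(real^'b::finite) \<times> (real^'b). vjoin (fst p) (snd p))"
    by (rule linearI) (simp_all add: vec_eq_Plus_iff)
  then have "bounded_linear (\<lambda>p::(real^'b) \<times> (real^'b). vjoin (fst p) (snd p))"
    by (simp add: linear_conv_bounded_linear)
  from bounded_linear.has_derivative[OF this has_derivative_Pair[OF assms]] show ?thesis
    by simp
qed

lemma inner_Jmap_Jmap: "Jmap a \<bullet> Jmap b = a \<bullet> b"
  by (simp add: inner_Plus add.commute)

lemma inner_Jmap_right: "a \<bullet> Jmap b = - (Jmap a \<bullet> b)"
  by (simp add: inner_Plus sum_negf[symmetric] mult.commute)

lemma inner_Jmap_self: "a \<bullet> Jmap a = 0"
  using inner_Jmap_right[of a a] by (simp add: inner_commute)

lemma Jmap_Jmap: "Jmap (Jmap a) = - a"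
  by (simp add: vec_eq_Plus_iff)

lemma cconj_Jmap: "cconj (Jmap a) = - Jmap (cconj a)"
  by (simp add: vec_eq_Plus_iff)

lemma inner_cconj_left: "cconj a \<bullet> b = a \<bullet> cconj b"
  by (simp add: inner_Plus)

lemma cconj_cconj: "cconj (cconj a) = a"
  by (simp add: vec_eq_Plus_iff)


locale unit_sphere_chart =
  fixes U :: "(real^'n::finite) set" and X :: "real^'n \<Rightarrow> real^'m::finite"
  assumes chart: "sphere_chart U X"
begin

lemma open_domain: "open U"
  using chart by (simp add: sphere_chart_def)

lemma differentiable_ipartial: "v \<in> U \<Longrightarrow> ipartial is X differentiable (at v)"
  using chart open_domain
  by (simp add: sphere_chart_def smooth_on_def differentiable_on_eq_differentiable_at)

definition dX where "dX v = frechet_derivative X (at v)"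

lemma has_derivative_chart: "v \<in> U \<Longrightarrow> (X has_derivative dX v) (at v)"
  unfolding dX_def using differentiable_ipartial[of v "[]"] frechet_derivative_works by auto

lemma differentiable_partial: "v \<in> U \<Longrightarrow> partial X k differentiable (at v)"
  using differentiable_ipartial[of v "[k]"] by simp

lemma partial_eq_dX: "v \<in> U \<Longrightarrow> partial X k v = dX v (axis k 1)"
  using partial_eq_derivative[OF has_derivative_chart] .

lemma linear_dX: "v \<in> U \<Longrightarrow> linear (dX v)"
  using has_derivative_chart has_derivative_linear by blast

lemma dX_eq_0_iff: "v \<in> U \<Longrightarrow> dX v c = 0 \<longleftrightarrow> c = 0"
proof -
  assume v: "v \<in> U"
  obtain X' where X': "(X has_derivative X') (at v)" "inj X'"
    using chart v by (auto simp: sphere_chart_def)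
  have "X' = dX v" using has_derivative_unique[OF X'(1) has_derivative_chart[OF v]] .
  then show ?thesis
    using X'(2) linear_0[OF linear_dX[OF v]] by (metis injD)
qed

lemma inner_self: "v \<in> U \<Longrightarrow> X v \<bullet> X v = 1"
  using chart by (auto simp: sphere_chart_def dot_square_norm)

lemma inner_partial: "v \<in> U \<Longrightarrow> X v \<bullet> partial X k v = 0"
proof -
  assume v: "v \<in> U"
  have "((\<lambda>w. X w \<bullet> X w) has_derivative (\<lambda>h. X v \<bullet> dX v h + dX v h \<bullet> X v)) (at v)"
    using has_derivative_inner[OF has_derivative_chart[OF v] has_derivative_chart[OF v]] .
  then have "X v \<bullet> dX v (axis k 1) + dX v (axis k 1) \<bullet> X v = 0"
    by (rule has_derivative_locally_constant[OF _ open_domain v]) (rule inner_self)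
  then show ?thesis using partial_eq_dX[OF v] by (simp add: inner_commute)
qed

end

subsection \<open>The Clifford torus and its frame\<close>

locale clifford_torus = X: unit_sphere_chart UX X + Y: unit_sphere_chart UY Y
  for UX :: "(real^'n::finite) set" and X :: "real^'n \<Rightarrow> real^'m::finite"
    and UY :: "(real^'n) set" and Y :: "real^'n \<Rightarrow> real^'m" +
  assumes dim: "CARD('m) = CARD('n) + 1"
begin

definition V where "V = {v. vleft v \<in> UX \<and> vright v \<in> UY}"

abbreviation C where "C \<equiv> cliffC X Y"
abbreviation D where "D \<equiv> cliffD X Y"
abbreviation P where "P i v \<equiv> partial C i v"
abbreviation g where "g v \<equiv> metric C v"

definition dC where
  "dC v k = (1 / sqrt 2) *\<^sub>R vjoin (X.dX (vleft v) (vleft k)) (Y.dX (vright v) (vright k))"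

lemma open_V: "open V"
proof -
  have "V = vleft -` UX \<inter> vright -` UY" by (auto simp: V_def)
  moreover have "open (vleft -` UX)"
    by (rule open_vimage[OF X.open_domain]) (simp add: linear_continuous_on bounded_linear_vleft)
  moreover have "open (vright -` UY)"
    by (rule open_vimage[OF Y.open_domain]) (simp add: linear_continuous_on bounded_linear_vright)
  ultimately show ?thesis by auto
qed

lemma has_derivative_C: "v \<in> V \<Longrightarrow> (C has_derivative dC v) (at v)"
proof -
  assume v: "v \<in> V"
  have "((\<lambda>v. X (vleft v)) has_derivative (\<lambda>k. X.dX (vleft v) (vleft k))) (at v)"
    using has_derivative_compose[OF bounded_linear_imp_has_derivative[OF bounded_linear_vleft]
        X.has_derivative_chart] v
    by (simp add: V_def)
  moreover have "((\<lambda>v. Y (vright v)) has_derivative (\<lambda>k. Y.dX (vright v) (vright k))) (at v)"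
    using has_derivative_compose[OF bounded_linear_imp_has_derivative[OF bounded_linear_vright]
        Y.has_derivative_chart] v
    by (simp add: V_def)
  ultimately show ?thesis
    unfolding cliffC_def dC_def by (intro has_derivative_scaleR_right has_derivative_vjoin)
qed

lemma linear_dC: "v \<in> V \<Longrightarrow> linear (dC v)"
  using has_derivative_C has_derivative_linear by blast

lemma partial_C_eq_dC: "v \<in> V \<Longrightarrow> P i v = dC v (axis i 1)"
  using partial_eq_derivative[OF has_derivative_C] by blast

lemma vleft_axis [simp]:
  "vleft (axis (Inl k) 1 :: real^('n + 'n)) = axis k 1" "vleft (axis (Inr k) 1 :: real^('n + 'n)) = 0"
  by (auto simp: vec_eq_iff axis_def)

lemma vright_axis [simp]:
  "vright (axis (Inr k) 1 :: real^('n + 'n)) = axis k 1" "vright (axis (Inl k) 1 :: real^('n + 'n)) = 0"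
  by (auto simp: vec_eq_iff axis_def)

lemma partial_C_Inl: "v \<in> V \<Longrightarrow> P (Inl k) v = (1 / sqrt 2) *\<^sub>R vjoin (partial X k (vleft v)) 0"
  by (simp add: partial_C_eq_dC dC_def V_def X.partial_eq_dX linear_0[OF Y.linear_dX])

lemma partial_C_Inr: "v \<in> V \<Longrightarrow> P (Inr k) v = (1 / sqrt 2) *\<^sub>R vjoin 0 (partial Y k (vright v))"
  by (simp add: partial_C_eq_dC dC_def V_def Y.partial_eq_dX linear_0[OF X.linear_dX])

lemma D_eq_cconj: "D v = cconj (C v)"
  by (simp add: cliffD_def cliffC_def vec_eq_Plus_iff)

lemma has_derivative_D: "v \<in> V \<Longrightarrow> (D has_derivative (\<lambda>k. cconj (dC v k))) (at v)"
  unfolding D_eq_cconj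
  using bounded_linear.has_derivative[OF linear_cconj[unfolded linear_conv_bounded_linear] has_derivative_C] .

lemma partial_D: "v \<in> V \<Longrightarrow> partial D i v = cconj (P i v)"
  using partial_eq_derivative[OF has_derivative_D] partial_C_eq_dC by simp

lemma has_derivative_JC: "v \<in> V \<Longrightarrow> ((\<lambda>v. Jmap (C v)) has_derivative (\<lambda>k. Jmap (dC v k))) (at v)"
  using bounded_linear.has_derivative[OF linear_Jmap[unfolded linear_conv_bounded_linear] has_derivative_C] .

text \<open>\<open>D\<close> reverses the \<open>Y\<close>-directions, so \<open>\<partial>\<^sub>iD = \<plusminus>\<partial>\<^sub>iC\<close> with the sign depending on the
  block of \<open>i\<close>.\<close>
definition block_sign :: "'n + 'n \<Rightarrow> real" where
  "block_sign i = (case i of Inl _ \<Rightarrow> 1 | Inr _ \<Rightarrow> -1)"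

lemma cconj_partial_C: "v \<in> V \<Longrightarrow> cconj (P i v) = block_sign i *\<^sub>R P i v"
  by (cases i) (simp_all add: partial_C_Inl partial_C_Inr cconj_vjoin block_sign_def vec_eq_Plus_iff)

lemma sum_block_sign: "(\<Sum>i\<in>UNIV. block_sign i) = 0"
  by (simp add: sum_UNIV_Plus block_sign_def)

lemma differentiable_partial_C: "v \<in> V \<Longrightarrow> P i differentiable (at v)"
proof -
  assume v: "v \<in> V"
  have scaled_vjoin:
    "(\<lambda>w. (1 / sqrt 2) *\<^sub>R vjoin (f w) (0::real^'m)) differentiable (at v)"
    "(\<lambda>w. (1 / sqrt 2) *\<^sub>R vjoin 0 (f w)) differentiable (at v)"
    if "f differentiable (at v)" for f :: "real^('n + 'n) \<Rightarrow> real^'m"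
    using that has_derivative_vjoin[OF _ has_derivative_const] has_derivative_vjoin[OF has_derivative_const]
    unfolding differentiable_def by (metis has_derivative_scaleR_right)+
  have diff: "(\<lambda>w. partial X k (vleft w)) differentiable (at v)"
    "(\<lambda>w. partial Y k (vright w)) differentiable (at v)" for k
    using differentiable_chain_at[OF bounded_linear_imp_differentiable[OF bounded_linear_vleft]
        X.differentiable_partial]
      differentiable_chain_at[OF bounded_linear_imp_differentiable[OF bounded_linear_vright]
        Y.differentiable_partial] v
    by (simp_all add: V_def o_def)
  show ?thesis
  proof (cases i)
    case (Inl k)
    show ?thesis
      by (rule differentiable_transform_within_open[OF scaled_vjoin(1)[OF diff(1)] open_V v])
        (simp add: Inl partial_C_Inl)
  next
    case (Inr k)
    show ?thesis
      by (rule differentiable_transform_within_open[OF scaled_vjoin(2)[OF diff(2)] open_V v])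
        (simp add: Inr partial_C_Inr)
  qed
qed


lemma partial_partial_C_commute: "u \<in> V \<Longrightarrow> partial (P j) i u = partial (P i) j u"
  using has_derivative_C differentiable_partial_C
  by (intro partial_partial_commute[OF open_V]) (auto simp: differentiable_def)

lemma inner_C_C: "v \<in> V \<Longrightarrow> C v \<bullet> C v = 1"
  by (simp add: cliffC_def inner_vjoin X.inner_self Y.inner_self V_def)

lemma inner_D_D: "v \<in> V \<Longrightarrow> D v \<bullet> D v = 1"
  by (simp add: cliffD_def inner_vjoin X.inner_self Y.inner_self V_def)

lemma inner_C_D: "v \<in> V \<Longrightarrow> C v \<bullet> D v = 0"
  by (simp add: cliffC_def cliffD_def inner_vjoin X.inner_self Y.inner_self V_def)

lemma inner_C_partial_C: "v \<in> V \<Longrightarrow> C v \<bullet> P i v = 0"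
  by (cases i) (simp_all add: partial_C_Inl partial_C_Inr cliffC_def inner_vjoin
      X.inner_partial Y.inner_partial V_def)

lemma inner_D_partial_C: "v \<in> V \<Longrightarrow> D v \<bullet> P i v = 0"
  by (cases i) (simp_all add: partial_C_Inl partial_C_Inr cliffD_def inner_vjoin
      X.inner_partial Y.inner_partial V_def)

lemmas inner_C_D' = inner_C_D[unfolded inner_commute[of "C _"]]
lemmas inner_partial_C_C = inner_C_partial_C[unfolded inner_commute[of "C _"]]
lemmas inner_partial_C_D = inner_D_partial_C[unfolded inner_commute[of "D _"]]

lemma metric_nth: "g v $ i $ j = P i v \<bullet> P j v"
  by (simp add: metric_def)

lemma partial_C_independent: "v \<in> V \<Longrightarrow> (\<Sum>i\<in>UNIV. c $ i *\<^sub>R P i v) = 0 \<Longrightarrow> c = 0"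
proof -
  assume v: "v \<in> V" and s: "(\<Sum>i\<in>UNIV. c $ i *\<^sub>R P i v) = 0"
  have "dC v c = (\<Sum>i\<in>UNIV. c $ i *\<^sub>R P i v)"
    using linear_eq_sum_axis[OF linear_dC[OF v], of c] partial_C_eq_dC[OF v] by simp
  then have "X.dX (vleft v) (vleft c) = 0" "Y.dX (vright v) (vright c) = 0"
    using s by (simp_all add: dC_def vjoin_eq_0_iff)
  then have "vleft c = 0" "vright c = 0"
    using v X.dX_eq_0_iff Y.dX_eq_0_iff by (auto simp: V_def)
  then show "c = 0" by (simp add: vec_eq_Plus_iff vec_eq_iff)
qed

definition frame where
  "frame v c = (case c of Inl i \<Rightarrow> P i v | Inr b \<Rightarrow> if b then C v else D v)"

lemma frame_simps [simp]: "frame v (Inl i) = P i v" "frame v (Inr True) = C v" "frame v (Inr False) = D v"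
  by (simp_all add: frame_def)

lemma sum_frame:
  "(\<Sum>c\<in>UNIV. x c *\<^sub>R frame v c) =
    (\<Sum>i\<in>UNIV. x (Inl i) *\<^sub>R P i v) + x (Inr True) *\<^sub>R C v + x (Inr False) *\<^sub>R D v"
  by (subst sum_UNIV_Plus) (simp add: sum_UNIV_bool algebra_simps)

lemma inner_sum_frame:
  assumes v: "v \<in> V" and y: "y = (\<Sum>c\<in>UNIV. x c *\<^sub>R frame v c)"
  shows "C v \<bullet> y = x (Inr True)" "D v \<bullet> y = x (Inr False)"
    "P j v \<bullet> y = (\<Sum>i\<in>UNIV. g v $ j $ i * x (Inl i))"
  using v unfolding y sum_frame
  by (simp_all add: inner_add_right inner_sum_right inner_C_partial_C inner_D_partial_C inner_C_C
      inner_D_D inner_C_D inner_C_D' inner_partial_C_C inner_partial_C_D metric_nth mult.commute)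

definition frame_index :: "('n + 'n) + bool \<Rightarrow> 'm + 'm" where
  "frame_index = (SOME \<beta>. bij \<beta>)"

lemma bij_frame_index: "bij frame_index"
proof -
  have "card (UNIV :: (('n + 'n) + bool) set) = card (UNIV :: ('m + 'm) set)"
    using dim by simp
  then have "\<exists>\<beta> :: ('n + 'n) + bool \<Rightarrow> 'm + 'm. bij \<beta>"
    using finite_same_card_bij[of "UNIV :: (('n + 'n) + bool) set" "UNIV :: ('m + 'm) set"]
    by (auto simp: bij_def)
  then show ?thesis
    unfolding frame_index_def by (rule someI_ex)
qed

definition frame_matrix where "frame_matrix v = col_matrix frame_index (frame v)"

lemma frame_matrix_mult:
  "frame_matrix v *v x = (\<chi> r. (\<Sum>c\<in>UNIV. x $ c *\<^sub>R frame v c) $ frame_index r)"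
  by (simp add: frame_matrix_def vec_eq_iff matrix_vector_mult_def sum_component mult.commute)

lemma frame_index_reindex_eq: "(\<chi> r. a $ frame_index r) = (\<chi> r. b $ frame_index r) \<Longrightarrow> a = b"
  using bij_is_surj[OF bij_frame_index] by (metis surjD vec_eq_iff vec_lambda_beta)

lemma det_frame_matrix_nonzero: "v \<in> V \<Longrightarrow> det (frame_matrix v) \<noteq> 0"
proof -
  assume v: "v \<in> V"
  have "x = 0" if "frame_matrix v *v x = 0" for x
  proof -
    have "(\<chi> r. (\<Sum>c\<in>UNIV. x $ c *\<^sub>R frame v c) $ frame_index r) = (\<chi> r. (0::real^('m + 'm)) $ frame_index r)"
      using that by (simp add: frame_matrix_mult vec_eq_iff)
    then have z: "(\<Sum>c\<in>UNIV. x $ c *\<^sub>R frame v c) = 0" by (rule frame_index_reindex_eq)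
    have t: "x $ Inr True = 0" and f: "x $ Inr False = 0"
      using inner_sum_frame(1,2)[OF v z[symmetric]] by simp_all
    then have "(\<Sum>i\<in>UNIV. (\<chi> i. x $ Inl i) $ i *\<^sub>R P i v) = 0"
      using z by (simp add: sum_frame)
    then have l: "(\<chi> i. x $ Inl i) = 0" by (rule partial_C_independent[OF v])
    have "x $ c = 0" for c
    proof (cases c)
      case (Inl i) then show ?thesis using l by (simp add: vec_eq_iff)
    next
      case (Inr b) then show ?thesis using t f by (cases b) auto
    qed
    then show "x = 0" by (simp add: vec_eq_iff)
  qed
  then have "inj ((*v) (frame_matrix v))"
    by (simp add: linear_inj_iff_eq_0[OF matrix_vector_mul_linear])
  then show ?thesis
    using det_nz_iff_inj[OF matrix_vector_mul_linear[of "frame_matrix v"]] by simp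
qed

lemma frame_matrix_gram: "v \<in> V \<Longrightarrow> transpose (frame_matrix v) ** frame_matrix v = block_id (g v)"
proof -
  assume v: "v \<in> V"
  have gram: "(transpose (frame_matrix v) ** frame_matrix v) $ c $ c' = frame v c \<bullet> frame v c'" for c c'
  proof -
    have "(transpose (frame_matrix v) ** frame_matrix v) $ c $ c' =
        (\<Sum>r\<in>UNIV. frame v c $ frame_index r * frame v c' $ frame_index r)"
      by (simp add: frame_matrix_def matrix_matrix_mult_def transpose_def)
    also have "\<dots> = (\<Sum>k\<in>UNIV. frame v c $ k * frame v c' $ k)"
      using sum.reindex[of frame_index UNIV "\<lambda>k. frame v c $ k * frame v c' $ k"] bij_frame_index
      by (simp add: bij_def)
    finally show ?thesis by (simp add: inner_vec_def)
  qed
  show ?thesis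
  proof (subst vec_eq_iff, intro allI, subst vec_eq_iff, intro allI)
    fix c c'
    show "(transpose (frame_matrix v) ** frame_matrix v) $ c $ c' = block_id (g v) $ c $ c'"
      unfolding gram using v
      by (cases c; cases c') (auto simp: block_id_def metric_nth frame_def inner_C_C inner_D_D
          inner_C_D inner_C_D' inner_C_partial_C inner_D_partial_C inner_partial_C_C
          inner_partial_C_D split: if_splits)
  qed
qed

lemma det_metric: "v \<in> V \<Longrightarrow> det (g v) = (det (frame_matrix v))\<^sup>2"
proof -
  assume v: "v \<in> V"
  have "det (g v) = det (block_id (g v) :: real^(('n + 'n) + bool)^(('n + 'n) + bool))"
    by (rule det_block_id[symmetric])
  also have "\<dots> = det (frame_matrix v) * det (frame_matrix v)"
    by (simp add: frame_matrix_gram[OF v, symmetric] det_mul)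
  finally show ?thesis by (simp add: power2_eq_square)
qed

lemma det_metric_pos: "v \<in> V \<Longrightarrow> det (g v) > 0"
  using det_metric det_frame_matrix_nonzero by simp

lemma invertible_metric: "v \<in> V \<Longrightarrow> invertible (g v)"
  using det_metric_pos invertible_det_nz by force

lemma transpose_metric: "transpose (g v) = g v"
  by (simp add: transpose_def metric_def vec_eq_iff inner_commute)

lemma transpose_metric_inv: "v \<in> V \<Longrightarrow> transpose (matrix_inv (g v)) = matrix_inv (g v)"
  by (rule transpose_matrix_inv_symmetric[OF invertible_metric transpose_metric])

lemma frame_spanning: "v \<in> V \<Longrightarrow> \<exists>x. y = (\<Sum>c\<in>UNIV. x c *\<^sub>R frame v c)"
proof -
  assume v: "v \<in> V"
  have inv: "invertible (frame_matrix v)"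
    using det_frame_matrix_nonzero[OF v] invertible_det_nz by blast
  let ?x = "matrix_inv (frame_matrix v) *v (\<chi> r. y $ frame_index r)"
  have "frame_matrix v *v ?x = (\<chi> r. y $ frame_index r)"
    by (simp add: matrix_vector_mul_assoc matrix_inv_right_left(1)[OF inv])
  then have "(\<Sum>c\<in>UNIV. ?x $ c *\<^sub>R frame v c) = y"
    unfolding frame_matrix_mult by (rule frame_index_reindex_eq)
  then show ?thesis by metis
qed

lemma frame_decomposition:
  assumes v: "v \<in> V"
  shows "y = (C v \<bullet> y) *\<^sub>R C v + (D v \<bullet> y) *\<^sub>R D v +
    (\<Sum>i\<in>UNIV. (matrix_inv (g v) *v (\<chi> j. P j v \<bullet> y)) $ i *\<^sub>R P i v)"
proof -
  obtain x where y: "y = (\<Sum>c\<in>UNIV. x c *\<^sub>R frame v c)" using frame_spanning[OF v] by blast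
  have "g v *v (\<chi> i. x (Inl i)) = (\<chi> j. P j v \<bullet> y)"
    using inner_sum_frame(3)[OF v y] by (simp add: vec_eq_iff matrix_vector_mult_def)
  then have tangential: "(\<chi> i. x (Inl i)) = matrix_inv (g v) *v (\<chi> j. P j v \<bullet> y)"
    by (rule matrix_inv_solve[OF invertible_metric[OF v]])
  have "y = (\<Sum>i\<in>UNIV. x (Inl i) *\<^sub>R P i v) + x (Inr True) *\<^sub>R C v + x (Inr False) *\<^sub>R D v"
    using y sum_frame by simp
  also have "\<dots> = (C v \<bullet> y) *\<^sub>R C v + (D v \<bullet> y) *\<^sub>R D v +
      (\<Sum>i\<in>UNIV. (matrix_inv (g v) *v (\<chi> j. P j v \<bullet> y)) $ i *\<^sub>R P i v)"
    using inner_sum_frame(1,2)[OF v y] tangential[symmetric] by (simp add: algebra_simps)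
  finally show ?thesis .
qed

subsection \<open>The tangential part of \<open>JC\<close>\<close>


definition hJ where "hJ v = D v \<bullet> Jmap (C v)"
definition wJ where "wJ v j = P j v \<bullet> Jmap (C v)"
definition ginv where "ginv v = matrix_inv (g v)"

text \<open>Coordinates of the tangential part of \<open>JC\<close> in the basis \<open>\<partial>\<^sub>iC\<close>.\<close>
definition tangent_coord where "tangent_coord v = ginv v *v (\<chi> j. wJ v j)"

lemma tangent_decomposition:
  assumes "v \<in> V" "C v \<bullet> y = 0" "D v \<bullet> y = 0"
  shows "y = (\<Sum>i\<in>UNIV. (ginv v *v (\<chi> j. P j v \<bullet> y)) $ i *\<^sub>R P i v)"
  using frame_decomposition[OF assms(1), of y] assms(2,3) by (simp add: ginv_def)

lemma Jmap_C_decomposition: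
  "v \<in> V \<Longrightarrow> Jmap (C v) = hJ v *\<^sub>R D v + (\<Sum>i\<in>UNIV. tangent_coord v $ i *\<^sub>R P i v)"
  using frame_decomposition[of v "Jmap (C v)"]
  by (simp add: tangent_coord_def ginv_def wJ_def hJ_def inner_Jmap_self)

lemma cconj_tangent_part:
  assumes v: "v \<in> V"
  shows "(\<Sum>i\<in>UNIV. tangent_coord v $ i *\<^sub>R cconj (P i v)) = - Jmap (D v) - hJ v *\<^sub>R C v"
proof -
  have "- Jmap (D v) = cconj (Jmap (C v))"
    by (simp add: cconj_Jmap D_eq_cconj)
  also have "\<dots> = hJ v *\<^sub>R C v + (\<Sum>i\<in>UNIV. tangent_coord v $ i *\<^sub>R cconj (P i v))"
    by (subst Jmap_C_decomposition[OF v])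
      (simp add: linear_add[OF linear_cconj] linear_sum[OF linear_cconj] linear_cmul[OF linear_cconj]
        D_eq_cconj cconj_cconj)
  finally show ?thesis by (simp add: algebra_simps)
qed

lemma Jmap_tangent_part:
  "v \<in> V \<Longrightarrow> (\<Sum>i\<in>UNIV. tangent_coord v $ i *\<^sub>R Jmap (P i v)) = - C v - hJ v *\<^sub>R Jmap (D v)"
  using arg_cong[OF Jmap_C_decomposition, of v Jmap]
  by (simp add: linear_add[OF linear_Jmap] linear_sum[OF linear_Jmap] linear_cmul[OF linear_Jmap]
      Jmap_Jmap algebra_simps)

lemma one_minus_hJ_squared:
  assumes v: "v \<in> V"
  shows "1 - (hJ v)\<^sup>2 = (\<Sum>i\<in>UNIV. \<Sum>j\<in>UNIV. ginv v $ i $ j * wJ v i * wJ v j)"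
proof -
  have "(\<Sum>i\<in>UNIV. \<Sum>j\<in>UNIV. ginv v $ i $ j * wJ v i * wJ v j) = (\<Sum>i\<in>UNIV. tangent_coord v $ i * wJ v i)"
    by (simp add: tangent_coord_def matrix_vector_mult_def sum_distrib_left sum_distrib_right mult_ac)
  also have "\<dots> = (Jmap (C v) - hJ v *\<^sub>R D v) \<bullet> Jmap (C v)"
    using Jmap_C_decomposition[OF v] by (simp add: wJ_def inner_sum_left)
  also have "\<dots> = 1 - (hJ v)\<^sup>2"
    using v by (simp add: inner_diff_left inner_Jmap_Jmap inner_C_C hJ_def power2_eq_square)
  finally show ?thesis by simp
qed

lemma partial_hJ:
  "v \<in> V \<Longrightarrow> partial hJ i v = cconj (P i v) \<bullet> Jmap (C v) + D v \<bullet> Jmap (P i v)"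
  using has_derivative_inner[OF has_derivative_D has_derivative_JC, of v]
  by (simp add: hJ_def[abs_def] partial_eq_derivative partial_C_eq_dC)

lemma partial_hJ_eq_inner:
  assumes v: "v \<in> V"
  shows "partial hJ j v = P j v \<bullet> (- 2 *\<^sub>R (Jmap (D v) + hJ v *\<^sub>R C v))"
proof -
  have "partial hJ j v = P j v \<bullet> cconj (Jmap (C v)) + D v \<bullet> Jmap (P j v)"
    using v by (simp add: partial_hJ inner_cconj_left)
  also have "\<dots> = - 2 * (P j v \<bullet> Jmap (D v))"
  proof -
    have "D v \<bullet> Jmap (P j v) = - (P j v \<bullet> Jmap (D v))"
      using inner_Jmap_right[of "D v" "P j v"] by (simp add: inner_commute)
    moreover have "cconj (Jmap (C v)) = - Jmap (D v)" by (simp add: cconj_Jmap D_eq_cconj)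
    ultimately show ?thesis by simp
  qed
  also have "\<dots> = P j v \<bullet> (- 2 *\<^sub>R (Jmap (D v) + hJ v *\<^sub>R C v))"
    using v by (simp add: inner_add_right inner_partial_C_C)
  finally show ?thesis .
qed

lemma tangent_derivative_hJ:
  assumes v: "v \<in> V"
  shows "(\<Sum>i\<in>UNIV. \<Sum>j\<in>UNIV. ginv v $ i $ j * wJ v j * partial hJ i v) = 0"
proof -
  have "(\<Sum>i\<in>UNIV. \<Sum>j\<in>UNIV. ginv v $ i $ j * wJ v j * partial hJ i v) =
      (\<Sum>i\<in>UNIV. tangent_coord v $ i * partial hJ i v)"
    by (simp add: tangent_coord_def matrix_vector_mult_def sum_distrib_right)
  also have "\<dots> = (\<Sum>i\<in>UNIV. tangent_coord v $ i *\<^sub>R cconj (P i v)) \<bullet> Jmap (C v) +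
      D v \<bullet> (\<Sum>i\<in>UNIV. tangent_coord v $ i *\<^sub>R Jmap (P i v))"
    using v by (simp add: partial_hJ inner_sum_left inner_sum_right distrib_left sum.distrib)
  also have "\<dots> = (- Jmap (D v) - hJ v *\<^sub>R C v) \<bullet> Jmap (C v) + D v \<bullet> (- C v - hJ v *\<^sub>R Jmap (D v))"
    by (simp only: cconj_tangent_part[OF v] Jmap_tangent_part[OF v])
  also have "\<dots> = 0"
    using inner_C_D[OF v]
    by (simp add: inner_diff_left inner_diff_right inner_Jmap_Jmap inner_Jmap_self inner_commute)
  finally show ?thesis .
qed

lemma gradient_hJ:
  assumes v: "v \<in> V"
  shows "(\<Sum>i\<in>UNIV. \<Sum>j\<in>UNIV. (ginv v $ i $ j * partial hJ i v) *\<^sub>R P j v) =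
    - 2 *\<^sub>R (Jmap (D v) + hJ v *\<^sub>R C v)"
proof -
  let ?E = "- 2 *\<^sub>R (Jmap (D v) + hJ v *\<^sub>R C v)"
  have "C v \<bullet> Jmap (D v) = - (Jmap (C v) \<bullet> D v)" by (rule inner_Jmap_right)
  also have "Jmap (C v) \<bullet> D v = hJ v" by (simp add: hJ_def inner_commute)
  finally have "C v \<bullet> ?E = 0" "D v \<bullet> ?E = 0"
    using v by (simp_all add: inner_add_right inner_C_C inner_Jmap_self inner_C_D')
  then have "?E = (\<Sum>i\<in>UNIV. (ginv v *v (\<chi> j. P j v \<bullet> ?E)) $ i *\<^sub>R P i v)"
    by (rule tangent_decomposition[OF v])
  also have "(\<chi> j. P j v \<bullet> ?E) = (\<chi> j. partial hJ j v)"
    by (simp add: partial_hJ_eq_inner[OF v])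
  finally have E: "?E = (\<Sum>i\<in>UNIV. (ginv v *v (\<chi> j. partial hJ j v)) $ i *\<^sub>R P i v)" .
  have "(\<Sum>i\<in>UNIV. \<Sum>j\<in>UNIV. (ginv v $ i $ j * partial hJ i v) *\<^sub>R P j v) =
      (\<Sum>j\<in>UNIV. \<Sum>i\<in>UNIV. (transpose (ginv v) $ j $ i * partial hJ i v) *\<^sub>R P j v)"
    by (subst sum.swap) (simp add: transpose_def)
  also have "\<dots> = (\<Sum>j\<in>UNIV. (transpose (ginv v) *v (\<chi> i. partial hJ i v)) $ j *\<^sub>R P j v)"
    by (rule sum_matrix_mult_scaleR)
  also have "\<dots> = ?E"
    using E transpose_metric_inv[OF v] by (simp add: ginv_def)
  finally show ?thesis .
qed

subsection \<open>The divergence of the tangential part of \<open>JC\<close>\<close>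


abbreviation det_cols where "det_cols F \<equiv> det (col_matrix frame_index F)"

definition frame_coord where
  "frame_coord v y c = (case c of Inl k \<Rightarrow> (ginv v *v (\<chi> j. P j v \<bullet> y)) $ k
     | Inr b \<Rightarrow> if b then C v \<bullet> y else D v \<bullet> y)"

lemma sum_frame_coord:
  assumes v: "v \<in> V"
  shows "(\<Sum>c\<in>UNIV. frame_coord v y c *\<^sub>R frame v c) = y"
proof -
  have "(\<Sum>c\<in>UNIV. frame_coord v y c *\<^sub>R frame v c) = (C v \<bullet> y) *\<^sub>R C v + (D v \<bullet> y) *\<^sub>R D v +
      (\<Sum>i\<in>UNIV. (matrix_inv (g v) *v (\<chi> j. P j v \<bullet> y)) $ i *\<^sub>R P i v)"
    by (simp add: sum_frame frame_coord_def ginv_def algebra_simps)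
  also have "\<dots> = y" by (rule frame_decomposition[OF v, symmetric])
  finally show ?thesis .
qed

lemma det_frame_update: "v \<in> V \<Longrightarrow> det_cols ((frame v)(c := y)) = frame_coord v y c * det (frame_matrix v)"
  using det_col_matrix_update_sum[of frame_index "frame v" c "frame_coord v y"] sum_frame_coord[of v y]
  by (simp add: frame_matrix_def)

lemma frame_update_self:
  "(frame v)(Inl i := P i v) = frame v" "(frame v)(Inr True := C v) = frame v"
  "(frame v)(Inr False := D v) = frame v"
  by (auto simp: fun_eq_iff frame_def)

text \<open>The frame with \<open>\<partial>\<^sub>iC\<close> replaced by \<open>JC\<close>; by Cramer's rule its determinant is
  \<open>\<surd>\<^bold>g g\<^sup>i\<^sup>j w\<^sub>j\<close> up to the sign of \<open>det (frame_matrix v)\<close>.\<close>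
definition Jframe where "Jframe v i = (frame v)(Inl i := Jmap (C v))"

lemma det_Jframe: "v \<in> V \<Longrightarrow> det_cols (Jframe v i) = tangent_coord v $ i * det (frame_matrix v)"
  by (simp add: Jframe_def det_frame_update frame_coord_def tangent_coord_def wJ_def)

text \<open>The partial derivative \<open>\<partial>\<^sub>i\<close> of the columns of \<open>Jframe u i\<close>.\<close>
definition Jframe_partial where
  "Jframe_partial u i c = (case c of Inl k \<Rightarrow> if k = i then Jmap (P i u) else partial (P k) i u
     | Inr b \<Rightarrow> if b then P i u else cconj (P i u))"

lemma has_derivative_Jframe_column:
  assumes u: "u \<in> V"
  shows "\<exists>F'. ((\<lambda>v. Jframe v i c) has_derivative F') (at u) \<and> F' (axis i 1) = Jframe_partial u i c"
proof (cases c)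
  case (Inl k)
  show ?thesis
  proof (cases "k = i")
    case True
    then show ?thesis
      using Inl has_derivative_JC[OF u] partial_C_eq_dC[OF u, of i]
      by (auto simp: Jframe_def Jframe_partial_def)
  next
    case False
    have "(P k has_derivative frechet_derivative (P k) (at u)) (at u)"
      using differentiable_partial_C[OF u] frechet_derivative_works by blast
    then show ?thesis
      using Inl False partial_eq_derivative[of "P k" _ u i]
      by (auto simp: Jframe_def Jframe_partial_def)
  qed
next
  case (Inr b)
  then show ?thesis
    using has_derivative_C[OF u] has_derivative_D[OF u] partial_C_eq_dC[OF u, of i]
    by (cases b) (auto simp: Jframe_def Jframe_partial_def)
qed

lemma partial_det_Jframe:
  assumes u: "u \<in> V"
  shows "(\<lambda>v. det_cols (Jframe v i)) differentiable (at u)"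
    and "partial (\<lambda>v. det_cols (Jframe v i)) i u =
      (\<Sum>c\<in>UNIV. det_cols ((Jframe u i)(c := Jframe_partial u i c)))"
proof -
  obtain F' where F': "((\<lambda>v. Jframe v i c) has_derivative F' c) (at u)"
      "F' c (axis i 1) = Jframe_partial u i c" for c
    using has_derivative_Jframe_column[OF u] by metis
  note det' = has_derivative_det_col_matrix[of "\<lambda>v. Jframe v i", OF F'(1)]
  show "(\<lambda>v. det_cols (Jframe v i)) differentiable (at u)"
    using det' unfolding differentiable_def by blast
  show "partial (\<lambda>v. det_cols (Jframe v i)) i u =
      (\<Sum>c\<in>UNIV. det_cols ((Jframe u i)(c := Jframe_partial u i c)))"
    by (simp add: partial_eq_derivative[OF det'] F'(2))
qed

lemma det_Jframe_update_C: "u \<in> V \<Longrightarrow> det_cols ((Jframe u i)(Inr True := P i u)) = 0"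
  using det_col_matrix_update_swap[of "Inl i" "Inr True" frame_index "frame u" "Jmap (C u)" "P i u"]
  by (simp add: Jframe_def frame_update_self det_frame_update frame_coord_def inner_Jmap_self)

lemma det_Jframe_update_D:
  assumes u: "u \<in> V"
  shows "det_cols ((Jframe u i)(Inr False := cconj (P i u))) = - block_sign i * (hJ u * det (frame_matrix u))"
proof -
  have "det_cols ((Jframe u i)(Inr False := P i u)) = - det_cols ((frame u)(Inr False := Jmap (C u)))"
    using det_col_matrix_update_swap[of "Inl i" "Inr False" frame_index "frame u" "Jmap (C u)" "P i u"]
    by (simp add: Jframe_def frame_update_self)
  then show ?thesis
    using det_col_matrix_update_scale[of frame_index "Jframe u i" "Inr False" "block_sign i" "P i u"]
    by (simp add: cconj_partial_C[OF u] det_frame_update[OF u] frame_coord_def hJ_def)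
qed

lemma det_Jframe_update_diagonal:
  "u \<in> V \<Longrightarrow> det_cols ((Jframe u i)(Inl i := Jmap (P i u))) =
    (ginv u *v (\<chi> j. P j u \<bullet> Jmap (P i u))) $ i * det (frame_matrix u)"
  by (simp add: Jframe_def det_frame_update frame_coord_def)

text \<open>Symmetry of the second derivatives of \<open>C\<close> makes the off-diagonal terms antisymmetric.\<close>
lemma det_Jframe_update_off_diagonal:
  assumes u: "u \<in> V" and "i \<noteq> k"
  shows "det_cols ((Jframe u k)(Inl i := partial (P i) k u)) =
    - det_cols ((Jframe u i)(Inl k := partial (P k) i u))"
proof -
  have "(Jframe u k)(Inl i := partial (P i) k u) = (frame u)(Inl i := partial (P k) i u, Inl k := Jmap (C u))"
    using assms partial_partial_C_commute[OF u, of i k] by (auto simp: fun_eq_iff Jframe_def)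
  then show ?thesis
    using det_col_matrix_update_swap[of "Inl i" "Inl k" frame_index "frame u" "Jmap (C u)"
        "partial (P k) i u"] assms(2)
    by (simp add: Jframe_def)
qed

lemma sum_diagonal_vanishes:
  assumes u: "u \<in> V"
  shows "(\<Sum>i\<in>UNIV. (ginv u *v (\<chi> j. P j u \<bullet> Jmap (P i u))) $ i) = 0"
proof -
  have sym: "ginv u $ i $ j = ginv u $ j $ i" for i j
    using transpose_metric_inv[OF u] unfolding ginv_def transpose_def vec_eq_iff by simp
  have antisym: "P j u \<bullet> Jmap (P i u) = - (P i u \<bullet> Jmap (P j u))" for i j
    using inner_Jmap_right[of "P j u" "P i u"] by (simp add: inner_commute)
  have "(\<Sum>i\<in>UNIV. (ginv u *v (\<chi> j. P j u \<bullet> Jmap (P i u))) $ i) =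
      (\<Sum>i\<in>UNIV. \<Sum>j\<in>UNIV. ginv u $ i $ j * (P j u \<bullet> Jmap (P i u)))"
    by (simp add: matrix_vector_mult_def)
  also have "\<dots> = 0"
  proof (rule sum_sum_antisymmetric)
    fix i j
    show "ginv u $ j $ i * (P i u \<bullet> Jmap (P j u)) = - (ginv u $ i $ j * (P j u \<bullet> Jmap (P i u)))"
      using sym[of j i] antisym[of j i] by simp
  qed
  finally show ?thesis .
qed

text \<open>The cancellation behind the divergence identity: in \<open>\<Sum>\<^sub>i \<partial>\<^sub>i det (Jframe u i)\<close> the
  second derivatives cancel in pairs, the diagonal terms cancel by antisymmetry of \<open>J\<close>, the
  \<open>C\<close>-column terms vanish, and the \<open>D\<close>-column terms carry the signs \<open>\<plusminus>1\<close> of the two blocks.\<close>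
lemma sum_partial_det_Jframe:
  assumes u: "u \<in> V"
  shows "(\<Sum>i\<in>UNIV. \<Sum>c\<in>UNIV. det_cols ((Jframe u i)(c := Jframe_partial u i c))) = 0"
proof -
  let ?t = "\<lambda>i k. det_cols ((Jframe u i)(Inl k := Jframe_partial u i (Inl k)))"
  let ?b = "\<lambda>i k. if k = i then 0 else ?t i k"
  have split: "(\<Sum>c\<in>UNIV. det_cols ((Jframe u i)(c := Jframe_partial u i c))) =
      (\<Sum>k\<in>UNIV. ?t i k) + det_cols ((Jframe u i)(Inr True := P i u))
      + det_cols ((Jframe u i)(Inr False := cconj (P i u)))" for i
    by (subst sum_UNIV_Plus) (simp add: sum_UNIV_bool Jframe_partial_def algebra_simps)
  have diagonal: "(\<Sum>k\<in>UNIV. ?t i k) = ?t i i + (\<Sum>k\<in>UNIV. ?b i k)" for i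
  proof -
    have "(\<Sum>k\<in>UNIV. ?t i k) = (\<Sum>k\<in>UNIV. (if k = i then ?t i i else 0) + ?b i k)"
      by (rule sum.cong) auto
    then show ?thesis by (simp add: sum.distrib)
  qed
  have "(\<Sum>i\<in>UNIV. \<Sum>k\<in>UNIV. ?b i k) = 0"
  proof (rule sum_sum_antisymmetric)
    fix i k show "?b k i = - ?b i k"
    proof (cases "i = k")
      case False
      then show ?thesis
        using det_Jframe_update_off_diagonal[OF u False] by (simp add: Jframe_partial_def)
    qed simp
  qed
  moreover have "(\<Sum>i\<in>UNIV. ?t i i) = 0"
    using sum_diagonal_vanishes[OF u]
    by (simp add: Jframe_partial_def det_Jframe_update_diagonal[OF u] sum_distrib_right[symmetric])
  ultimately show ?thesis
    by (simp add: split diagonal det_Jframe_update_C[OF u] det_Jframe_update_D[OF u] sum.distrib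
        sum_subtractf sum_distrib_right[symmetric] sum_negf sum_block_sign)
qed


lemma differentiable_frame:
  assumes u: "u \<in> V"
  shows "(\<lambda>v. frame v c) differentiable (at u)"
proof (cases c)
  case (Inl k)
  then show ?thesis using differentiable_partial_C[OF u] by simp
next
  case (Inr b)
  then show ?thesis
    using has_derivative_C[OF u] has_derivative_D[OF u] by (cases b) (auto simp: differentiable_def)
qed

lemma differentiable_det_frame_matrix:
  assumes u: "u \<in> V"
  shows "(\<lambda>v. det (frame_matrix v)) differentiable (at u)"
  unfolding frame_matrix_def
proof (rule differentiable_det)
  fix r c
  obtain F' where "((\<lambda>v. frame v c) has_derivative F') (at u)"
    using differentiable_frame[OF u] unfolding differentiable_def by blast
  from bounded_linear.has_derivative[OF bounded_linear_vec_nth this]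
  show "(\<lambda>v. col_matrix frame_index (frame v) $ r $ c) differentiable (at u)"
    unfolding differentiable_def by auto
qed

lemma differentiable_metric_nth: "u \<in> V \<Longrightarrow> (\<lambda>v. g v $ a $ b) differentiable (at u)"
proof -
  assume u: "u \<in> V"
  obtain Da Db where "(P a has_derivative Da) (at u)" "(P b has_derivative Db) (at u)"
    using differentiable_partial_C[OF u] unfolding differentiable_def by blast
  from has_derivative_inner[OF this] show ?thesis
    unfolding metric_nth differentiable_def by blast
qed

lemma differentiable_sqrt_det_metric: "u \<in> V \<Longrightarrow> (\<lambda>v. sqrt (det (g v))) differentiable (at u)"
proof -
  assume u: "u \<in> V"
  obtain d' where d': "((\<lambda>v. det (g v)) has_derivative d') (at u)"
    using differentiable_det[of g u] differentiable_metric_nth[OF u] unfolding differentiable_def by blast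
  show ?thesis
    using DERIV_compose_FDERIV[OF DERIV_real_sqrt[OF det_metric_pos[OF u]] d']
    unfolding differentiable_def by blast
qed

lemma differentiable_ginv_nth: "u \<in> V \<Longrightarrow> (\<lambda>v. ginv v $ i $ j) differentiable (at u)"
proof -
  assume u: "u \<in> V"
  let ?G = "\<lambda>v. (\<chi> r c. if c = i then (if r = j then 1 else 0) else g v $ r $ c) :: real^('n + 'n)^('n + 'n)"
  have "(\<lambda>v. det (?G v)) differentiable (at u)"
  proof (rule differentiable_det)
    fix r c show "(\<lambda>v. ?G v $ r $ c) differentiable (at u)"
      using differentiable_metric_nth[OF u, of r c] by (cases "c = i") simp_all
  qed
  moreover have "(\<lambda>v. det (g v)) differentiable (at u)"
    using differentiable_det[of g u] differentiable_metric_nth[OF u] by blast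
  ultimately have "(\<lambda>v. det (?G v) / det (g v)) differentiable (at u)"
    using det_metric_pos[OF u] by simp
  then show ?thesis
  proof (rule differentiable_transform_within_open[OF _ open_V u])
    fix v assume v: "v \<in> V"
    show "det (?G v) / det (g v) = ginv v $ i $ j"
      using matrix_inv_nth_cramer[of "g v" i j] det_metric_pos[OF v] by (simp add: ginv_def)
  qed
qed

lemma differentiable_wJ: "u \<in> V \<Longrightarrow> (\<lambda>v. wJ v j) differentiable (at u)"
proof -
  assume u: "u \<in> V"
  obtain Dj where "(P j has_derivative Dj) (at u)"
    using differentiable_partial_C[OF u] unfolding differentiable_def by blast
  from has_derivative_inner[OF this has_derivative_JC[OF u]] show ?thesis
    unfolding wJ_def differentiable_def by blast
qed

lemma differentiable_density:
  "u \<in> V \<Longrightarrow> (\<lambda>v. sqrt (det (g v)) * ginv v $ i $ j * wJ v j) differentiable (at u)"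
  using differentiable_sqrt_det_metric differentiable_ginv_nth differentiable_wJ
  by (intro differentiable_mult) auto

text \<open>Near \<open>u\<close> the sign of \<open>det (frame_matrix v)\<close> is constant, so there
  \<open>\<surd>\<^bold>g = \<bar>det (frame_matrix v)\<bar>\<close> is a fixed multiple of the determinant.\<close>
lemma sign_neighbourhood:
  assumes u: "u \<in> V"
  defines "s \<equiv> sgn (det (frame_matrix u))"
  obtains S where "open S" "u \<in> S" "S \<subseteq> V" "\<And>v. v \<in> S \<Longrightarrow> sqrt (det (g v)) = s * det (frame_matrix v)"
proof -
  let ?S = "V \<inter> (\<lambda>v. s * det (frame_matrix v)) -` {0<..}"
  have "continuous_on V (\<lambda>v. det (frame_matrix v))"
    by (intro differentiable_imp_continuous_on differentiable_at_imp_differentiable_on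
        differentiable_det_frame_matrix)
  then have "continuous_on V (\<lambda>v. s * det (frame_matrix v))"
    by (intro continuous_intros)
  then have "open ?S"
    by (rule continuous_open_preimage[OF _ open_V open_greaterThan])
  moreover have "u \<in> ?S"
    using u det_frame_matrix_nonzero[OF u] by (auto simp: s_def sgn_if)
  moreover have "sqrt (det (g v)) = s * det (frame_matrix v)" if "v \<in> ?S" for v
  proof -
    have "s = 1 \<or> s = -1"
      using det_frame_matrix_nonzero[OF u] by (auto simp: s_def sgn_if)
    moreover have "sqrt (det (g v)) = \<bar>det (frame_matrix v)\<bar>"
      using that det_metric by simp
    moreover have "0 < s * det (frame_matrix v)"
      using that by simp
    ultimately show ?thesis by (elim disjE) (simp_all add: abs_if)
  qed
  ultimately show ?thesis using that by blast
qed

lemma divergence_tangent_JC: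
  assumes u: "u \<in> V"
  shows "(\<Sum>i\<in>UNIV. \<Sum>j\<in>UNIV. partial (\<lambda>v. sqrt (det (g v)) * ginv v $ i $ j * wJ v j) i u) = 0"
proof -
  define s where "s = sgn (det (frame_matrix u))"
  obtain S where S: "open S" "u \<in> S" "S \<subseteq> V"
    and sqrt_det: "\<And>v. v \<in> S \<Longrightarrow> sqrt (det (g v)) = s * det (frame_matrix v)"
    using sign_neighbourhood[OF u] unfolding s_def by blast
  have density: "(\<Sum>j\<in>UNIV. sqrt (det (g v)) * ginv v $ i $ j * wJ v j) = s * det_cols (Jframe v i)"
    if v: "v \<in> S" for v i
  proof -
    have "(\<Sum>j\<in>UNIV. sqrt (det (g v)) * ginv v $ i $ j * wJ v j) = sqrt (det (g v)) * tangent_coord v $ i"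
      by (simp add: tangent_coord_def matrix_vector_mult_def sum_distrib_left mult.assoc)
    then show ?thesis
      using sqrt_det[OF v] det_Jframe[of v i] v S(3) by auto
  qed
  have "(\<Sum>i\<in>UNIV. \<Sum>j\<in>UNIV. partial (\<lambda>v. sqrt (det (g v)) * ginv v $ i $ j * wJ v j) i u) =
      (\<Sum>i\<in>UNIV. partial (\<lambda>v. \<Sum>j\<in>UNIV. sqrt (det (g v)) * ginv v $ i $ j * wJ v j) i u)"
    by (intro sum.cong refl partial_sum[symmetric]) (simp_all add: differentiable_density[OF u])
  also have "\<dots> = (\<Sum>i\<in>UNIV. partial (\<lambda>v. s * det_cols (Jframe v i)) i u)"
  proof (intro sum.cong refl partial_cong_open[OF _ S(1,2)])
    show "(\<lambda>v. s * det_cols (Jframe v i)) differentiable (at u)" for i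
      by (intro differentiable_mult differentiable_const partial_det_Jframe(1)[OF u])
  qed (simp add: density)
  also have "\<dots> = s * (\<Sum>i\<in>UNIV. \<Sum>c\<in>UNIV. det_cols ((Jframe u i)(c := Jframe_partial u i c)))"
    by (simp add: partial_const_mult partial_det_Jframe[OF u] sum_distrib_left)
  also have "\<dots> = 0"
    by (simp add: sum_partial_det_Jframe[OF u])
  finally show ?thesis .
qed

end

theorem lemma2p3:
  fixes X Y :: "real^'n \<Rightarrow> real^'m"
    and UX UY :: "(real^'n) set"
    and u :: "real^('n + 'n)"
  assumes dim: "CARD('m) = CARD('n) + 1"
    and chartX: "sphere_chart UX X"
    and chartY: "sphere_chart UY Y"
    and u_in: "vleft u \<in> UX" "vright u \<in> UY"
  defines "C \<equiv> cliffC X Y"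
    and "D \<equiv> cliffD X Y"
    and "ginv \<equiv> (\<lambda>v. matrix_inv (metric (cliffC X Y) v))"
    and "gdet \<equiv> (\<lambda>v. det (metric (cliffC X Y) v))"
    and "w \<equiv> wvec (cliffC X Y)"
    and "h \<equiv> (\<lambda>v. cliffD X Y v \<bullet> Jmap (cliffC X Y v))"
  shows "(Jmap (C u) = h u *\<^sub>R D u + (\<Sum>i\<in>UNIV. \<Sum>j\<in>UNIV. (ginv u $ i $ j * w u j) *\<^sub>R partial C i u))
     \<and> (- Jmap (D u) = h u *\<^sub>R C u + (\<Sum>i\<in>UNIV. \<Sum>j\<in>UNIV. (ginv u $ i $ j * w u j) *\<^sub>R partial D i u))
     \<and> (1 - (h u)\<^sup>2 = (\<Sum>i\<in>UNIV. \<Sum>j\<in>UNIV. ginv u $ i $ j * w u i * w u j))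
     \<and> ((\<Sum>i\<in>UNIV. \<Sum>j\<in>UNIV. partial (\<lambda>v. sqrt (gdet v) * ginv v $ i $ j * w v j) i u) = 0)
     \<and> ((\<Sum>i\<in>UNIV. \<Sum>j\<in>UNIV. ginv u $ i $ j * w u j * partial h i u) = 0)
     \<and> ((\<Sum>i\<in>UNIV. \<Sum>j\<in>UNIV. (ginv u $ i $ j * partial h i u) *\<^sub>R partial C j u) = - 2 *\<^sub>R (Jmap (D u) + h u *\<^sub>R C u))"
proof -
  interpret T: clifford_torus UX X UY Y
    by unfold_locales (fact chartX chartY dim)+
  have u: "u \<in> T.V" using u_in by (simp add: T.V_def)
  have names: "h = T.hJ" "ginv = T.ginv" "w = T.wJ" "gdet = (\<lambda>v. det (T.g v))"
    by (simp_all add: h_def T.hJ_def ginv_def T.ginv_def w_def T.wJ_def wvec_def gdet_def fun_eq_iff)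
  have tangent: "(\<Sum>i\<in>UNIV. \<Sum>j\<in>UNIV. (T.ginv u $ i $ j * T.wJ u j) *\<^sub>R Z i) =
      (\<Sum>i\<in>UNIV. T.tangent_coord u $ i *\<^sub>R Z i)" for Z :: "'n + 'n \<Rightarrow> real^('m + 'm)"
    by (simp add: sum_matrix_mult_scaleR T.tangent_coord_def)
  show ?thesis
    unfolding C_def D_def names tangent
  proof (intro conjI)
    show "Jmap (cliffC X Y u) = T.hJ u *\<^sub>R cliffD X Y u + (\<Sum>i\<in>UNIV. T.tangent_coord u $ i *\<^sub>R T.P i u)"
      by (rule T.Jmap_C_decomposition[OF u])
    show "- Jmap (cliffD X Y u) =
        T.hJ u *\<^sub>R cliffC X Y u + (\<Sum>i\<in>UNIV. T.tangent_coord u $ i *\<^sub>R partial (cliffD X Y) i u)"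
      using T.cconj_tangent_part[OF u] by (simp add: T.partial_D[OF u])
  qed (use T.one_minus_hJ_squared T.divergence_tangent_JC T.tangent_derivative_hJ T.gradient_hJ u in auto)
qed

end
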